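(* Let $g_t$ be the hypoelliptic Brownian motion on $\mathbb{H}$, $g^\ast_t=\max_{0\le s\le t}|g_s|$, $\phi(t)=\sqrt{\frac{\log\log t}{t}}$, and $t_n=n^n$. Then for every $\varepsilon>0$, \[ \mathbb{P}\left(\bigcap_{k\ge2}\bigcup_{n\ge k}\left\{\phi(t_n)\,g^\ast_{t_{n-1}}>\varepsilon\right\}\right)=0. \] Consequently $\lim_{n\to\infty}\phi(t_n)\,g^\ast_{t_{n-1}}=0$ almost surely.
   Context: The Heisenberg group $\mathbb{H}$ is $\mathbb{R}^2\times\mathbb{R}$ with multiplication $(\mathbf{v}_1,z_1)\cdot(\mathbf{v}_2,z_2)=(\mathbf{v}_1+\mathbf{v}_2,\ z_1+z_2+\tfrac12\omega(\mathbf{v}_1,\mathbf{v}_2))$, where $\omega((x_1,y_1),(x_2,y_2))=x_1y_2-x_2y_1$. The homogeneous norm on $\mathbb{H}$ is $|(\mathbf{x},z)|:=\left(\|\mathbf{x}\|_{\mathbb{R}^2}^4+z^2\right)^{1/4}$. Let $\bm{W}_t$ be a standard two-dimensional Brownian motion. The hypoelliptic Brownian motion is $g_t:=(\bm{W}_t,A_t)$ with $A_t:=\frac12\int_0^t (W_1(s)\,dW_2(s)-W_2(s)\,dW_1(s))$. *)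

theory Defs
  imports "HOL-Probability.Probability"
begin

definition coord :: "(real \<Rightarrow> 'a \<Rightarrow> real) \<Rightarrow> (real \<Rightarrow> 'a \<Rightarrow> real) \<Rightarrow> bool \<Rightarrow> real \<Rightarrow> 'a \<Rightarrow> real" where
  "coord W1 W2 b = (if b then W2 else W1)"

definition std_bm2 :: "'a measure \<Rightarrow> (real \<Rightarrow> 'a \<Rightarrow> real) \<Rightarrow> (real \<Rightarrow> 'a \<Rightarrow> real) \<Rightarrow> bool" where
  "std_bm2 M W1 W2 \<longleftrightarrow> prob_space M \<and>
     (\<forall>t. W1 t \<in> borel_measurable M \<and> W2 t \<in> borel_measurable M) \<and>
     (\<forall>\<omega>\<in>space M. W1 0 \<omega> = 0 \<and> W2 0 \<omega> = 0 \<and>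
        continuous_on {0..} (\<lambda>t. W1 t \<omega>) \<and> continuous_on {0..} (\<lambda>t. W2 t \<omega>)) \<and>
     (\<forall>(ts :: nat \<Rightarrow> real) (n :: nat). 0 \<le> ts 0 \<and> (\<forall>k<n. ts k < ts (Suc k)) \<longrightarrow>
        prob_space.indep_vars M (\<lambda>_. borel)
          (\<lambda>(k, b) \<omega>. coord W1 W2 b (ts (Suc k)) \<omega> - coord W1 W2 b (ts k) \<omega>)
          ({..<n} \<times> (UNIV :: bool set)) \<and>
        (\<forall>k<n. \<forall>b. distributed M lborel
           (\<lambda>\<omega>. coord W1 W2 b (ts (Suc k)) \<omega> - coord W1 W2 b (ts k) \<omega>)
           (normal_density 0 (sqrt (ts (Suc k) - ts k)))))"

definition levy_riemann :: "(real \<Rightarrow> 'a \<Rightarrow> real) \<Rightarrow> (real \<Rightarrow> 'a \<Rightarrow> real) \<Rightarrow> real \<Rightarrow> nat \<Rightarrow> 'a \<Rightarrow> real" where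
  "levy_riemann W1 W2 t m \<omega> = (1/2) * (\<Sum>i<2^m.
      let s = t * real i / 2^m; s' = t * real (Suc i) / 2^m in
      W1 s \<omega> * (W2 s' \<omega> - W2 s \<omega>) - W2 s \<omega> * (W1 s' \<omega> - W1 s \<omega>))"

text \<open>A is (a continuous version of) the Levy area
  A_t = 1/2 \<integral>_0^t (W1 dW2 - W2 dW1) (Ito integral), characterised as the limit in probability
  of left-point Riemann sums.\<close>
definition levy_area :: "'a measure \<Rightarrow> (real \<Rightarrow> 'a \<Rightarrow> real) \<Rightarrow> (real \<Rightarrow> 'a \<Rightarrow> real) \<Rightarrow> (real \<Rightarrow> 'a \<Rightarrow> real) \<Rightarrow> bool" where
  "levy_area M W1 W2 A \<longleftrightarrow>
     (\<forall>t. A t \<in> borel_measurable M) \<and>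
     (\<forall>\<omega>\<in>space M. continuous_on {0..} (\<lambda>t. A t \<omega>)) \<and>
     (\<forall>t\<ge>0. \<forall>e>0. (\<lambda>m. measure M {\<omega>\<in>space M. \<bar>levy_riemann W1 W2 t m \<omega> - A t \<omega>\<bar> > e})
                      \<longlonglongrightarrow> 0)"

definition heis_norm :: "real \<Rightarrow> real \<Rightarrow> real \<Rightarrow> real" where
  "heis_norm x y z = ((x^2 + y^2)^2 + z^2) powr (1/4)"

definition hbm_max :: "(real \<Rightarrow> 'a \<Rightarrow> real) \<Rightarrow> (real \<Rightarrow> 'a \<Rightarrow> real) \<Rightarrow> (real \<Rightarrow> 'a \<Rightarrow> real) \<Rightarrow> real \<Rightarrow> 'a \<Rightarrow> real" where
  "hbm_max W1 W2 A t \<omega> = (SUP s\<in>{0..t}. heis_norm (W1 s \<omega>) (W2 s \<omega>) (A s \<omega>))"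

definition lil_phi :: "real \<Rightarrow> real" where
  "lil_phi t = sqrt (ln (ln t) / t)"

definition tseq :: "nat \<Rightarrow> real" where
  "tseq n = real n ^ n"

end

theory Submission
  imports Defs "HOL-Real_Asymp.Real_Asymp"
begin

(* Sample the Brownian motion on a grid of mesh \<eta>. Both |W_k|^2 - 2k\<eta> and the left-point
  Riemann sums of the Levy area are then sums of martingale differences in the grid increments,
  so Kolmogorov's maximal inequality bounds their running maxima by second moments of order T^2.
  Letting the Riemann sums converge and refining dyadic grids (by path continuity) gives
  P(g*_T > \<rho>) \<le> 800 (T/\<rho>^2)^2 whenever 8T \<le> \<rho>^2.  For \<rho> = \<epsilon>/\<phi>(t_n) and T = t_(n-1)
  one has T \<phi>(t_n)^2 \<le> ln(n ln n)/n = o(n^(-3/4)), so these probabilities are O(n^(-3/2)),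
  and Borel-Cantelli applies. *)

section \<open>Random variables with finite moments of all orders\<close>

definition finite_moments :: "'a measure \<Rightarrow> ('a \<Rightarrow> real) \<Rightarrow> bool" where
  "finite_moments M X \<longleftrightarrow> X \<in> borel_measurable M \<and> (\<forall>p::nat. integrable M (\<lambda>\<omega>. \<bar>X \<omega>\<bar> ^ p))"

lemma finite_moments_measurable[measurable_dest]: "finite_moments M X \<Longrightarrow> X \<in> borel_measurable M"
  by (simp add: finite_moments_def)

lemma finite_moments_integrable_abs_power:
  "finite_moments M X \<Longrightarrow> integrable M (\<lambda>\<omega>. \<bar>X \<omega>\<bar> ^ p)"
  by (simp add: finite_moments_def)

lemma finite_moments_integrable_power:
  assumes "finite_moments M X" shows "integrable M (\<lambda>\<omega>. X \<omega> ^ p)"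
proof (rule Bochner_Integration.integrable_bound)
  show "integrable M (\<lambda>\<omega>. \<bar>X \<omega>\<bar> ^ p)" by (rule finite_moments_integrable_abs_power[OF assms])
  show "(\<lambda>\<omega>. X \<omega> ^ p) \<in> borel_measurable M" using assms by measurable
  show "AE x in M. norm (X x ^ p) \<le> norm (\<bar>X x\<bar> ^ p)" by (simp add: power_abs)
qed

lemma finite_moments_integrable: "finite_moments M X \<Longrightarrow> integrable M X"
  using finite_moments_integrable_power[of M X 1] by simp

lemma finite_moments_cong:
  assumes "finite_moments M X" "\<And>\<omega>. \<omega> \<in> space M \<Longrightarrow> X \<omega> = Y \<omega>" "Y \<in> borel_measurable M"
  shows "finite_moments M Y"
  unfolding finite_moments_def
proof (intro conjI allI assms(3))
  fix p :: nat
  have "integrable M (\<lambda>\<omega>. \<bar>X \<omega>\<bar> ^ p) \<longleftrightarrow> integrable M (\<lambda>\<omega>. \<bar>Y \<omega>\<bar> ^ p)"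
    by (rule Bochner_Integration.integrable_cong) (use assms(2) in auto)
  then show "integrable M (\<lambda>\<omega>. \<bar>Y \<omega>\<bar> ^ p)"
    using finite_moments_integrable_abs_power[OF assms(1)] by simp
qed

lemma abs_add_power_le: "\<bar>x + y\<bar> ^ p \<le> 2 ^ p * (\<bar>x\<bar> ^ p + \<bar>y\<bar> ^ p)" for x y :: real
proof -
  have "\<bar>x + y\<bar> ^ p \<le> (2 * max \<bar>x\<bar> \<bar>y\<bar>) ^ p" by (intro power_mono) auto
  also have "\<dots> = 2 ^ p * max \<bar>x\<bar> \<bar>y\<bar> ^ p" by (simp add: power_mult_distrib)
  also have "max \<bar>x\<bar> \<bar>y\<bar> ^ p \<le> \<bar>x\<bar> ^ p + \<bar>y\<bar> ^ p" by (auto simp: max_def)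
  finally show ?thesis by simp
qed

lemma abs_mult_power_le: "\<bar>x * y\<bar> ^ p \<le> \<bar>x\<bar> ^ (2*p) + \<bar>y\<bar> ^ (2*p)" for x y :: real
proof -
  have "2 * \<bar>x * y\<bar> ^ p \<le> (\<bar>x\<bar> ^ p)^2 + (\<bar>y\<bar> ^ p)^2"
    using sum_squares_bound[of "\<bar>x\<bar> ^ p" "\<bar>y\<bar> ^ p"]
    by (simp add: abs_mult power_mult_distrib mult.assoc)
  moreover have "0 \<le> \<bar>x * y\<bar> ^ p" by simp
  ultimately have "\<bar>x * y\<bar> ^ p \<le> (\<bar>x\<bar> ^ p)^2 + (\<bar>y\<bar> ^ p)^2" by linarith
  then show ?thesis by (simp add: power_mult[symmetric] mult.commute)
qed

lemma finite_moments_add: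
  assumes "finite_moments M X" "finite_moments M Y"
  shows "finite_moments M (\<lambda>\<omega>. X \<omega> + Y \<omega>)"
  unfolding finite_moments_def
proof safe
  show "(\<lambda>\<omega>. X \<omega> + Y \<omega>) \<in> borel_measurable M" using assms by measurable
  fix p :: nat
  show "integrable M (\<lambda>\<omega>. \<bar>X \<omega> + Y \<omega>\<bar> ^ p)"
  proof (rule Bochner_Integration.integrable_bound)
    show "integrable M (\<lambda>\<omega>. 2 ^ p * (\<bar>X \<omega>\<bar> ^ p + \<bar>Y \<omega>\<bar> ^ p))"
      using assms
      by (intro integrable_mult_right Bochner_Integration.integrable_add
        finite_moments_integrable_abs_power)
    show "(\<lambda>\<omega>. \<bar>X \<omega> + Y \<omega>\<bar> ^ p) \<in> borel_measurable M" using assms by measurable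
    show "AE x in M. norm (\<bar>X x + Y x\<bar> ^ p) \<le> norm (2 ^ p * (\<bar>X x\<bar> ^ p + \<bar>Y x\<bar> ^ p))"
      using abs_add_power_le by (auto intro: order.trans[OF _ abs_ge_self])
  qed
qed

lemma finite_moments_mult:
  assumes "finite_moments M X" "finite_moments M Y"
  shows "finite_moments M (\<lambda>\<omega>. X \<omega> * Y \<omega>)"
  unfolding finite_moments_def
proof safe
  show "(\<lambda>\<omega>. X \<omega> * Y \<omega>) \<in> borel_measurable M" using assms by measurable
  fix p :: nat
  show "integrable M (\<lambda>\<omega>. \<bar>X \<omega> * Y \<omega>\<bar> ^ p)"
  proof (rule Bochner_Integration.integrable_bound)
    show "integrable M (\<lambda>\<omega>. \<bar>X \<omega>\<bar> ^ (2*p) + \<bar>Y \<omega>\<bar> ^ (2*p))"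
      using assms by (intro Bochner_Integration.integrable_add finite_moments_integrable_abs_power)
    show "(\<lambda>\<omega>. \<bar>X \<omega> * Y \<omega>\<bar> ^ p) \<in> borel_measurable M" using assms by measurable
    show "AE x in M. norm (\<bar>X x * Y x\<bar> ^ p) \<le> norm (\<bar>X x\<bar> ^ (2*p) + \<bar>Y x\<bar> ^ (2*p))"
      using abs_mult_power_le by (auto intro: order.trans[OF _ abs_ge_self])
  qed
qed

lemma finite_moments_scale: "finite_moments M X \<Longrightarrow> finite_moments M (\<lambda>\<omega>. c * X \<omega>)"
  unfolding finite_moments_def by (auto simp: abs_mult power_mult_distrib)

lemma finite_moments_diff:
  "finite_moments M X \<Longrightarrow> finite_moments M Y \<Longrightarrow> finite_moments M (\<lambda>\<omega>. X \<omega> - Y \<omega>)"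
  using finite_moments_add[OF _ finite_moments_scale, of M X Y "-1"] by simp

context prob_space
begin

lemma finite_moments_const: "finite_moments M (\<lambda>\<omega>. c)"
  unfolding finite_moments_def by auto

lemma finite_moments_bounded:
  assumes "X \<in> borel_measurable M" "\<And>\<omega>. \<omega> \<in> space M \<Longrightarrow> \<bar>X \<omega>\<bar> \<le> B"
  shows "finite_moments M X"
  unfolding finite_moments_def
proof safe
  fix p :: nat
  show "integrable M (\<lambda>\<omega>. \<bar>X \<omega>\<bar> ^ p)"
  proof (rule Bochner_Integration.integrable_bound)
    show "integrable M (\<lambda>\<omega>. B ^ p)" by simp
    show "(\<lambda>\<omega>. \<bar>X \<omega>\<bar> ^ p) \<in> borel_measurable M" using assms by measurable
    show "AE x in M. norm (\<bar>X x\<bar> ^ p) \<le> norm (B ^ p)"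
    proof (rule AE_I2)
      fix x assume "x \<in> space M"
      then have "\<bar>X x\<bar> ^ p \<le> B ^ p" by (intro power_mono) (auto simp: assms)
      then show "norm (\<bar>X x\<bar> ^ p) \<le> norm (B ^ p)" by auto
    qed
  qed
qed (fact assms)

lemma finite_moments_power: "finite_moments M X \<Longrightarrow> finite_moments M (\<lambda>\<omega>. X \<omega> ^ n)"
  by (induction n) (auto intro: finite_moments_mult finite_moments_const)

lemma finite_moments_sum:
  "finite I \<Longrightarrow> (\<And>i. i \<in> I \<Longrightarrow> finite_moments M (X i)) \<Longrightarrow> finite_moments M (\<lambda>\<omega>. \<Sum>i\<in>I. X i \<omega>)"
  by (induction I rule: finite_induct) (auto intro!: finite_moments_add finite_moments_const)

lemma finite_moments_normal:
  assumes "distributed M lborel X (normal_density 0 \<sigma>)" "0 < \<sigma>"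
  shows "finite_moments M X"
  unfolding finite_moments_def
proof safe
  show "X \<in> borel_measurable M" using assms(1) by (auto dest: distributed_measurable)
  fix p :: nat
  have "integrable lborel (\<lambda>x. normal_density 0 \<sigma> x * \<bar>x\<bar> ^ p)"
    using integrable_normal_moment_abs[OF assms(2), of 0 p] by simp
  then show "integrable M (\<lambda>\<omega>. \<bar>X \<omega>\<bar> ^ p)"
    using distributed_integrable[OF assms(1), of "\<lambda>x. \<bar>x\<bar> ^ p"] by simp
qed

lemma expectation_normal_power_even:
  assumes "distributed M lborel X (normal_density 0 \<sigma>)" "0 < \<sigma>"
  shows "expectation (\<lambda>\<omega>. X \<omega> ^ (2 * k)) = fact (2 * k) / ((2 / \<sigma>\<^sup>2)^k * fact k)"
  using distributed_integral[OF assms(1), of "\<lambda>x. x ^ (2 * k)"]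
    integral_normal_moment_even[OF assms(2), of 0 k] by simp

lemma expectation_normal_power2:
  assumes "distributed M lborel X (normal_density 0 \<sigma>)" "0 < \<sigma>"
  shows "expectation (\<lambda>\<omega>. X \<omega> ^ 2) = \<sigma>^2"
  using expectation_normal_power_even[OF assms, of 1] by simp

lemma expectation_normal_power4:
  assumes "distributed M lborel X (normal_density 0 \<sigma>)" "0 < \<sigma>"
  shows "expectation (\<lambda>\<omega>. X \<omega> ^ 4) = 3 * \<sigma>^4"
  using expectation_normal_power_even[OF assms, of 2]
  by (simp add: fact_numeral power_numeral_reduce field_simps)

end

section \<open>Brownian motion sampled on a grid\<close>

locale bm_grid =
  fixes M :: "'a measure" and W1 W2 :: "real \<Rightarrow> 'a \<Rightarrow> real" and \<eta> :: real
  assumes bm: "std_bm2 M W1 W2" and eta: "0 < \<eta>"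

sublocale bm_grid \<subseteq> prob_space M
  using bm by (simp add: std_bm2_def)

context bm_grid
begin

abbreviation Wgrid :: "bool \<Rightarrow> nat \<Rightarrow> 'a \<Rightarrow> real" where
  "Wgrid b k \<equiv> coord W1 W2 b (real k * \<eta>)"

definition incr :: "nat \<Rightarrow> bool \<Rightarrow> 'a \<Rightarrow> real" where
  "incr k b \<omega> = Wgrid b (Suc k) \<omega> - Wgrid b k \<omega>"

definition past_incrs :: "nat \<Rightarrow> 'a \<Rightarrow> nat \<times> bool \<Rightarrow> real" where
  "past_incrs i \<omega> = (\<lambda>p\<in>{..<i}\<times>UNIV. incr (fst p) (snd p) \<omega>)"

text \<open>Measurability with respect to the \<sigma>-algebra generated by the first \<open>i\<close> increments is
  encoded, following Doob-Dynkin, as factorisation through a Borel function of these increments.\<close>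

definition adapted :: "nat \<Rightarrow> ('a \<Rightarrow> real) \<Rightarrow> bool" where
  "adapted i G \<longleftrightarrow> (\<exists>g \<in> borel_measurable (PiM ({..<i}\<times>(UNIV::bool set)) (\<lambda>_. borel)).
      \<forall>\<omega>\<in>space M. G \<omega> = g (past_incrs i \<omega>))"

lemma coord_measurable[measurable]: "coord W1 W2 b t \<in> borel_measurable M"
  using bm by (cases b) (auto simp: std_bm2_def coord_def)

lemma coord_zero: "\<omega> \<in> space M \<Longrightarrow> coord W1 W2 b 0 \<omega> = 0"
  using bm by (cases b) (auto simp: std_bm2_def coord_def)

lemma incr_measurable[measurable]: "incr k b \<in> borel_measurable M"
  unfolding incr_def by measurable

lemma Wgrid_Suc: "Wgrid b (Suc k) \<omega> = Wgrid b k \<omega> + incr k b \<omega>"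
  by (simp add: incr_def)

lemma Wgrid_eq_sum_incr: "\<omega> \<in> space M \<Longrightarrow> Wgrid b k \<omega> = (\<Sum>l<k. incr l b \<omega>)"
  by (induction k) (auto simp: coord_zero incr_def)

lemma Wgrid_add_diff: "Wgrid b (k + c) \<omega> - Wgrid b k \<omega> = (\<Sum>r<c. incr (k + r) b \<omega>)"
  by (induction c) (simp_all add: incr_def)

lemma incrs_indep_normal:
  "indep_vars (\<lambda>_. borel) (\<lambda>(k, b) \<omega>. incr k b \<omega>) ({..<n} \<times> UNIV) \<and>
   (\<forall>k<n. \<forall>b. distributed M lborel (incr k b)
     (normal_density 0 (sqrt (real (Suc k) * \<eta> - real k * \<eta>))))"
proof -
  have grid: "0 \<le> real 0 * \<eta> \<and> (\<forall>k<n. real k * \<eta> < real (Suc k) * \<eta>)" using eta by auto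
  from bm have "\<forall>(ts :: nat \<Rightarrow> real) n. 0 \<le> ts 0 \<and> (\<forall>k<n. ts k < ts (Suc k)) \<longrightarrow>
        indep_vars (\<lambda>_. borel)
          (\<lambda>(k, b) \<omega>. coord W1 W2 b (ts (Suc k)) \<omega> - coord W1 W2 b (ts k) \<omega>) ({..<n} \<times> UNIV) \<and>
        (\<forall>k<n. \<forall>b. distributed M lborel
           (\<lambda>\<omega>. coord W1 W2 b (ts (Suc k)) \<omega> - coord W1 W2 b (ts k) \<omega>)
           (normal_density 0 (sqrt (ts (Suc k) - ts k))))"
    unfolding std_bm2_def by blast
  from this[rule_format, OF grid] show ?thesis unfolding incr_def[abs_def] by simp
qed

lemma indep_incrs: "indep_vars (\<lambda>_. borel) (\<lambda>p. incr (fst p) (snd p)) ({..<n} \<times> UNIV)"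
proof -
  have "(\<lambda>p. incr (fst p) (snd p)) = (\<lambda>(k, b) \<omega>. incr k b \<omega>)" by (auto simp: fun_eq_iff)
  then show ?thesis using incrs_indep_normal by simp
qed

lemma incr_distributed: "distributed M lborel (incr k b) (normal_density 0 (sqrt \<eta>))"
proof -
  have "real (Suc k) * \<eta> - real k * \<eta> = \<eta>" by (simp add: algebra_simps)
  then show ?thesis using incrs_indep_normal[of "Suc k"] by auto
qed

lemma finite_moments_incr: "finite_moments M (incr k b)"
  using finite_moments_normal[OF incr_distributed] eta by simp

lemma expectation_incr: "expectation (incr k b) = 0"
  using normal_distributed_expectation[OF _ incr_distributed] eta by simp

lemma expectation_incr_sq: "expectation (\<lambda>\<omega>. incr k b \<omega> ^ 2) = \<eta>"
  using expectation_normal_power2[OF incr_distributed] eta by simp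

lemma expectation_incr_power4: "expectation (\<lambda>\<omega>. incr k b \<omega> ^ 4) = 3 * \<eta>^2"
proof -
  have "sqrt \<eta> ^ 4 = (sqrt \<eta> ^ 2)^2" by (simp flip: power_mult)
  also have "\<dots> = \<eta>^2" using eta by simp
  finally have "sqrt \<eta> ^ 4 = \<eta>^2" .
  then show ?thesis using expectation_normal_power4[OF incr_distributed] eta by simp
qed

lemma past_incrs_measurable[measurable]:
  "past_incrs i \<in> measurable M (PiM ({..<i}\<times>UNIV) (\<lambda>_. borel))"
  unfolding past_incrs_def by measurable

lemma adapted_measurable: assumes "adapted i G" shows "G \<in> borel_measurable M"
proof -
  obtain g where g[measurable]: "g \<in> borel_measurable (PiM ({..<i}\<times>(UNIV::bool set)) (\<lambda>_. borel))"
    and e: "\<forall>\<omega>\<in>space M. G \<omega> = g (past_incrs i \<omega>)" using assms unfolding adapted_def by blast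
  have "(\<lambda>\<omega>. g (past_incrs i \<omega>)) \<in> borel_measurable M" by measurable
  then show ?thesis using e by (subst measurable_cong[where g="\<lambda>\<omega>. g (past_incrs i \<omega>)"]) auto
qed

lemma adapted_cong:
  assumes "adapted i F" "\<And>\<omega>. \<omega> \<in> space M \<Longrightarrow> F \<omega> = G \<omega>"
  shows "adapted i G"
  using assms unfolding adapted_def by auto

lemma adapted_compose:
  assumes "adapted i F" "f \<in> borel_measurable borel"
  shows "adapted i (\<lambda>\<omega>. f (F \<omega>))"
proof -
  obtain g where g: "g \<in> borel_measurable (PiM ({..<i}\<times>(UNIV::bool set)) (\<lambda>_. borel))"
    and e: "\<forall>\<omega>\<in>space M. F \<omega> = g (past_incrs i \<omega>)" using assms(1) unfolding adapted_def by blast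
  have "(\<lambda>x. f (g x)) \<in> borel_measurable (PiM ({..<i}\<times>(UNIV::bool set)) (\<lambda>_. borel))"
    using measurable_comp[OF g assms(2)] by (simp add: o_def)
  then show ?thesis unfolding adapted_def using e by auto
qed

lemma adapted_compose2:
  assumes "adapted i F" "adapted i G"
    and "(\<lambda>p. h (fst p) (snd p)) \<in> borel_measurable (borel \<Otimes>\<^sub>M borel)"
  shows "adapted i (\<lambda>\<omega>. h (F \<omega>) (G \<omega>))"
proof -
  obtain f where f: "f \<in> borel_measurable (PiM ({..<i}\<times>(UNIV::bool set)) (\<lambda>_. borel))"
    and ef: "\<forall>\<omega>\<in>space M. F \<omega> = f (past_incrs i \<omega>)" using assms(1) unfolding adapted_def by blast
  obtain g where g: "g \<in> borel_measurable (PiM ({..<i}\<times>(UNIV::bool set)) (\<lambda>_. borel))"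
    and eg: "\<forall>\<omega>\<in>space M. G \<omega> = g (past_incrs i \<omega>)" using assms(2) unfolding adapted_def by blast
  have "(\<lambda>x. h (f x) (g x)) \<in> borel_measurable (PiM ({..<i}\<times>(UNIV::bool set)) (\<lambda>_. borel))"
    using measurable_comp[OF measurable_Pair[OF f g] assms(3)] by (simp add: o_def)
  then show ?thesis unfolding adapted_def using ef eg by auto
qed

lemma adapted_const: "adapted i (\<lambda>\<omega>. c)"
  unfolding adapted_def by (rule bexI[of _ "\<lambda>x. c"]) simp_all

lemma adapted_add: "adapted i F \<Longrightarrow> adapted i G \<Longrightarrow> adapted i (\<lambda>\<omega>. F \<omega> + G \<omega>)"
  using adapted_compose2[where h="(+)" and F=F and G=G and i=i] by simp

lemma adapted_diff: "adapted i F \<Longrightarrow> adapted i G \<Longrightarrow> adapted i (\<lambda>\<omega>. F \<omega> - G \<omega>)"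
  using adapted_compose2[where h="(-)" and F=F and G=G and i=i] by simp

lemma adapted_mult: "adapted i F \<Longrightarrow> adapted i G \<Longrightarrow> adapted i (\<lambda>\<omega>. F \<omega> * G \<omega>)"
  using adapted_compose2[where h="(*)" and F=F and G=G and i=i] by simp

lemma adapted_sum:
  "finite I \<Longrightarrow> (\<And>l. l \<in> I \<Longrightarrow> adapted i (F l)) \<Longrightarrow> adapted i (\<lambda>\<omega>. \<Sum>l\<in>I. F l \<omega>)"
  by (induction I rule: finite_induct) (auto intro: adapted_add adapted_const)

lemma adapted_prod:
  "finite I \<Longrightarrow> (\<And>l. l \<in> I \<Longrightarrow> adapted i (F l)) \<Longrightarrow> adapted i (\<lambda>\<omega>. \<Prod>l\<in>I. F l \<omega>)"
  by (induction I rule: finite_induct) (auto intro: adapted_mult adapted_const)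

lemma adapted_mono:
  assumes "adapted i G" "i \<le> j" shows "adapted j G"
proof -
  obtain g where g: "g \<in> borel_measurable (PiM ({..<i}\<times>(UNIV::bool set)) (\<lambda>_. borel))"
    and e: "\<forall>\<omega>\<in>space M. G \<omega> = g (past_incrs i \<omega>)" using assms(1) unfolding adapted_def by blast
  have sub: "{..<i}\<times>(UNIV::bool set) \<subseteq> {..<j}\<times>UNIV" using assms(2) by auto
  have m: "(\<lambda>x. g (restrict x ({..<i}\<times>UNIV)))
      \<in> borel_measurable (PiM ({..<j}\<times>(UNIV::bool set)) (\<lambda>_. borel))"
    using measurable_comp[OF measurable_restrict_subset[OF sub] g] by (simp add: o_def)
  have "past_incrs i \<omega> = restrict (past_incrs j \<omega>) ({..<i}\<times>UNIV)" for \<omega>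
    using sub by (auto simp: past_incrs_def fun_eq_iff)
  then show ?thesis unfolding adapted_def
    by (intro bexI[OF _ m]) (use e in simp)
qed

lemma adapted_incr: assumes "l < i" shows "adapted i (incr l b)"
  unfolding adapted_def
proof (rule bexI[of _ "\<lambda>x. x (l, b)"])
  show "\<forall>\<omega>\<in>space M. incr l b \<omega> = past_incrs i \<omega> (l, b)" using assms by (auto simp: past_incrs_def)
qed (use assms in auto)

lemma adapted_Wgrid: "adapted k (Wgrid b k)"
  by (rule adapted_cong[OF adapted_sum[OF _ adapted_incr]]) (auto simp: Wgrid_eq_sum_incr)

lemma indep_past_incrs:
  "indep_var (PiM ({..<i}\<times>UNIV) (\<lambda>_. borel)) (past_incrs i)
             (PiM ({i}\<times>UNIV) (\<lambda>_. borel)) (\<lambda>\<omega>. restrict (\<lambda>p. incr (fst p) (snd p) \<omega>) ({i}\<times>UNIV))"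
  unfolding past_incrs_def
  by (rule indep_var_restrict[OF indep_incrs[of "Suc i"]]) auto

lemma expectation_adapted_mult_incr:
  assumes "adapted i G" "finite_moments M G"
    and "f \<in> borel_measurable borel" "finite_moments M (\<lambda>\<omega>. f (incr i b \<omega>))"
  shows "expectation (\<lambda>\<omega>. G \<omega> * f (incr i b \<omega>)) = expectation G * expectation (\<lambda>\<omega>. f (incr i b \<omega>))"
proof -
  obtain g where g: "g \<in> borel_measurable (PiM ({..<i}\<times>(UNIV::bool set)) (\<lambda>_. borel))"
    and e: "\<forall>\<omega>\<in>space M. G \<omega> = g (past_incrs i \<omega>)" using assms(1) unfolding adapted_def by blast
  have fm: "(\<lambda>x. f (x (i, b))) \<in> borel_measurable (PiM ({i}\<times>(UNIV::bool set)) (\<lambda>_. borel))"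
    using assms(3) by measurable
  have "indep_var borel (g \<circ> past_incrs i)
      borel ((\<lambda>x. f (x (i, b))) \<circ> (\<lambda>\<omega>. restrict (\<lambda>p. incr (fst p) (snd p) \<omega>) ({i}\<times>UNIV)))"
    by (rule indep_var_compose[OF indep_past_incrs g fm])
  then have indep: "indep_var borel (\<lambda>\<omega>. g (past_incrs i \<omega>)) borel (\<lambda>\<omega>. f (incr i b \<omega>))"
    by (simp add: o_def)
  have "integrable M G \<longleftrightarrow> integrable M (\<lambda>\<omega>. g (past_incrs i \<omega>))"
    by (rule Bochner_Integration.integrable_cong) (use e in auto)
  then have int_g: "integrable M (\<lambda>\<omega>. g (past_incrs i \<omega>))"
    using finite_moments_integrable[OF assms(2)] by simp
  have "expectation (\<lambda>\<omega>. G \<omega> * f (incr i b \<omega>))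
      = expectation (\<lambda>\<omega>. g (past_incrs i \<omega>) * f (incr i b \<omega>))"
    using e by (intro Bochner_Integration.integral_cong) auto
  also have "\<dots> = expectation (\<lambda>\<omega>. g (past_incrs i \<omega>)) * expectation (\<lambda>\<omega>. f (incr i b \<omega>))"
    by (rule indep_var_lebesgue_integral[OF indep int_g finite_moments_integrable[OF assms(4)]])
  also have "expectation (\<lambda>\<omega>. g (past_incrs i \<omega>)) = expectation G"
    using e by (intro Bochner_Integration.integral_cong) auto
  finally show ?thesis .
qed

end

section \<open>Martingale differences and Kolmogorov's maximal inequality\<close>

definition first_exceed :: "real \<Rightarrow> (nat \<Rightarrow> real) \<Rightarrow> nat \<Rightarrow> real" where
  "first_exceed a s k = (if a \<le> \<bar>s k\<bar> \<and> (\<forall>l<k. \<bar>s l\<bar> < a) then 1 else 0)"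

lemma first_exceed_eq_prod:
  "first_exceed a s k = (if a \<le> \<bar>s k\<bar> then 1 else 0) * (\<Prod>l<k. if \<bar>s l\<bar> < a then 1 else 0)"
proof (cases "\<forall>l<k. \<bar>s l\<bar> < a")
  case False
  then obtain l where "l < k" "\<not> \<bar>s l\<bar> < a" by auto
  then have "(\<Prod>l<k. if \<bar>s l\<bar> < a then 1 else 0 :: real) = 0" by (intro prod_zero) auto
  then show ?thesis using False by (simp add: first_exceed_def)
qed (simp add: first_exceed_def)

lemma first_exceed_nonneg: "0 \<le> first_exceed a s k"
  by (simp add: first_exceed_def)

lemma abs_first_exceed_le_1: "\<bar>first_exceed a s k\<bar> \<le> 1"
  by (simp add: first_exceed_def)

lemma sum_first_exceed: "(\<Sum>k\<le>n. first_exceed a s k) = (if \<exists>k\<le>n. a \<le> \<bar>s k\<bar> then 1 else 0)"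
proof (cases "\<exists>k\<le>n. a \<le> \<bar>s k\<bar>")
  case True
  define k0 where "k0 = (LEAST k. a \<le> \<bar>s k\<bar>)"
  have k0: "a \<le> \<bar>s k0\<bar>" unfolding k0_def using True by (auto intro: LeastI)
  have k0n: "k0 \<le> n" unfolding k0_def using True by (auto intro: Least_le order.trans)
  have below: "\<bar>s l\<bar> < a" if "l < k0" for l
    using not_less_Least[OF that[unfolded k0_def]] by simp
  have "first_exceed a s k = (if k = k0 then 1 else 0)" for k
  proof (cases k k0 rule: linorder_cases)
    case less then show ?thesis using below[of k] by (simp add: first_exceed_def)
  next
    case equal then show ?thesis using k0 below by (simp add: first_exceed_def)
  next
    case greater then show ?thesis using k0 by (auto simp: first_exceed_def)
  qed
  then show ?thesis using True k0n by simp
qed (auto simp: first_exceed_def)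

lemma sq_mult_first_exceed_le:
  assumes "0 \<le> a" shows "a^2 * first_exceed a s k \<le> (s k)^2 * first_exceed a s k"
proof (cases "a \<le> \<bar>s k\<bar>")
  case True
  then have "a^2 \<le> \<bar>s k\<bar>^2" using assms by (intro power_mono) auto
  then show ?thesis by (simp add: first_exceed_def)
qed (simp add: first_exceed_def)

lemma borel_measurable_threshold_indicators:
  "(\<lambda>x::real. if a \<le> \<bar>x\<bar> then 1 else 0 :: real) \<in> borel_measurable borel"
  "(\<lambda>x::real. if \<bar>x\<bar> < a then 1 else 0 :: real) \<in> borel_measurable borel"
  by (measurable, measurable)

context bm_grid
begin

text \<open>Orthogonality to every adapted \<open>G\<close> with finite moments stands in for
  \<open>E[D | F\<^sub>i] = 0\<close>; it is all that Kolmogorov's inequality needs.\<close>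

definition mart_diff :: "nat \<Rightarrow> ('a \<Rightarrow> real) \<Rightarrow> bool" where
  "mart_diff i D \<longleftrightarrow> adapted (Suc i) D \<and> finite_moments M D \<and>
     (\<forall>G. adapted i G \<and> finite_moments M G \<longrightarrow> expectation (\<lambda>\<omega>. G \<omega> * D \<omega>) = 0)"

lemma mart_diff_orthogonal:
  "mart_diff i D \<Longrightarrow> adapted i G \<Longrightarrow> finite_moments M G \<Longrightarrow> expectation (\<lambda>\<omega>. G \<omega> * D \<omega>) = 0"
  unfolding mart_diff_def by blast

lemma mart_diff_finite_moments: "mart_diff i D \<Longrightarrow> finite_moments M D"
  unfolding mart_diff_def by blast

lemma mart_diff_adapted: "mart_diff i D \<Longrightarrow> adapted (Suc i) D"
  unfolding mart_diff_def by blast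

lemma mart_diff_mult_fun_incr:
  assumes "adapted i H" "finite_moments M H" "f \<in> borel_measurable borel"
    and "finite_moments M (\<lambda>\<omega>. f (incr i b \<omega>))" "expectation (\<lambda>\<omega>. f (incr i b \<omega>)) = 0"
  shows "mart_diff i (\<lambda>\<omega>. H \<omega> * f (incr i b \<omega>))"
  unfolding mart_diff_def
proof (intro conjI allI impI)
  show "adapted (Suc i) (\<lambda>\<omega>. H \<omega> * f (incr i b \<omega>))"
    by (intro adapted_mult adapted_mono[OF assms(1)] adapted_compose[OF adapted_incr] assms(3)) auto
  show "finite_moments M (\<lambda>\<omega>. H \<omega> * f (incr i b \<omega>))" by (intro finite_moments_mult assms(2,4))
  fix G assume G: "adapted i G \<and> finite_moments M G"
  have "expectation (\<lambda>\<omega>. G \<omega> * (H \<omega> * f (incr i b \<omega>)))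
      = expectation (\<lambda>\<omega>. (G \<omega> * H \<omega>) * f (incr i b \<omega>))"
    by (simp add: mult.assoc)
  also have "\<dots> = expectation (\<lambda>\<omega>. G \<omega> * H \<omega>) * expectation (\<lambda>\<omega>. f (incr i b \<omega>))"
    by (rule expectation_adapted_mult_incr)
      (use G assms in \<open>auto intro: adapted_mult finite_moments_mult\<close>)
  finally show "expectation (\<lambda>\<omega>. G \<omega> * (H \<omega> * f (incr i b \<omega>))) = 0" using assms(5) by simp
qed

lemma mart_diff_mult_incr:
  assumes "adapted i H" "finite_moments M H"
  shows "mart_diff i (\<lambda>\<omega>. H \<omega> * incr i b \<omega>)"
  using mart_diff_mult_fun_incr[OF assms, of "\<lambda>x. x" b]
  by (simp add: finite_moments_incr expectation_incr)

lemma mart_diff_incr_sq: "mart_diff i (\<lambda>\<omega>. incr i b \<omega>^2 - \<eta>)"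
proof -
  have "finite_moments M (\<lambda>\<omega>. incr i b \<omega> ^ 2 - \<eta>)"
    by (intro finite_moments_diff finite_moments_power finite_moments_const finite_moments_incr)
  moreover have "expectation (\<lambda>\<omega>. incr i b \<omega> ^ 2 - \<eta>) = 0"
    using expectation_incr_sq[of i b]
      finite_moments_integrable[OF finite_moments_power[OF finite_moments_incr[of i b], of 2]]
    by (simp add: Bochner_Integration.integral_diff prob_space)
  ultimately show ?thesis
    using mart_diff_mult_fun_incr[OF adapted_const finite_moments_const, of "\<lambda>x. x^2 - \<eta>" i b 1]
    by simp
qed

lemma mart_diff_add:
  assumes "mart_diff i D1" "mart_diff i D2" shows "mart_diff i (\<lambda>\<omega>. D1 \<omega> + D2 \<omega>)"
  unfolding mart_diff_def
proof (intro conjI allI impI)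
  show "adapted (Suc i) (\<lambda>\<omega>. D1 \<omega> + D2 \<omega>)" using assms by (intro adapted_add mart_diff_adapted)
  show "finite_moments M (\<lambda>\<omega>. D1 \<omega> + D2 \<omega>)" using assms
    by (intro finite_moments_add mart_diff_finite_moments)
  fix G assume G: "adapted i G \<and> finite_moments M G"
  have "expectation (\<lambda>\<omega>. G \<omega> * (D1 \<omega> + D2 \<omega>)) = expectation (\<lambda>\<omega>. G \<omega> * D1 \<omega> + G \<omega> * D2 \<omega>)"
    by (simp add: distrib_left)
  also have "\<dots> = expectation (\<lambda>\<omega>. G \<omega> * D1 \<omega>) + expectation (\<lambda>\<omega>. G \<omega> * D2 \<omega>)"
    using G mart_diff_finite_moments[OF assms(1)] mart_diff_finite_moments[OF assms(2)]
    by (intro Bochner_Integration.integral_add finite_moments_integrable finite_moments_mult) auto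
  also have "\<dots> = 0" using G assms by (simp add: mart_diff_orthogonal)
  finally show "expectation (\<lambda>\<omega>. G \<omega> * (D1 \<omega> + D2 \<omega>)) = 0" .
qed

lemma mart_diff_scale:
  assumes "mart_diff i D" shows "mart_diff i (\<lambda>\<omega>. c * D \<omega>)"
  unfolding mart_diff_def
proof (intro conjI allI impI)
  show "adapted (Suc i) (\<lambda>\<omega>. c * D \<omega>)" using assms
    by (intro adapted_mult adapted_const mart_diff_adapted)
  show "finite_moments M (\<lambda>\<omega>. c * D \<omega>)" using assms
    by (intro finite_moments_scale mart_diff_finite_moments)
  fix G assume G: "adapted i G \<and> finite_moments M G"
  have "expectation (\<lambda>\<omega>. G \<omega> * (c * D \<omega>)) = c * expectation (\<lambda>\<omega>. G \<omega> * D \<omega>)"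
    by (simp add: ac_simps)
  also have "\<dots> = 0" using G assms by (simp add: mart_diff_orthogonal)
  finally show "expectation (\<lambda>\<omega>. G \<omega> * (c * D \<omega>)) = 0" .
qed

lemma mart_diff_diff:
  assumes "mart_diff i D1" "mart_diff i D2" shows "mart_diff i (\<lambda>\<omega>. D1 \<omega> - D2 \<omega>)"
  using mart_diff_add[OF assms(1) mart_diff_scale[OF assms(2), of "-1"]] by simp

lemma adapted_sum_mart_diff:
  assumes "\<And>i. mart_diff i (D i)" "k \<le> j"
  shows "adapted j (\<lambda>\<omega>. \<Sum>i<k. D i \<omega>)"
  using assms by (intro adapted_sum adapted_mono[OF mart_diff_adapted]) auto

lemma finite_moments_sum_mart_diff:
  assumes "\<And>i. mart_diff i (D i)"
  shows "finite_moments M (\<lambda>\<omega>. \<Sum>i\<in>I. D i \<omega>)"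
  by (cases "finite I")
    (use assms in \<open>auto intro: finite_moments_sum mart_diff_finite_moments finite_moments_const\<close>)

lemma expectation_sum_mart_diff_sq:
  assumes "\<And>i. mart_diff i (D i)"
  shows "expectation (\<lambda>\<omega>. (\<Sum>i<n. D i \<omega>)^2) = (\<Sum>i<n. expectation (\<lambda>\<omega>. D i \<omega> ^ 2))"
proof (induction n)
  case 0 then show ?case by simp
next
  case (Suc n)
  let ?S = "\<lambda>\<omega>. \<Sum>i<n. D i \<omega>"
  have mS: "finite_moments M ?S" by (rule finite_moments_sum_mart_diff[OF assms])
  have mD: "finite_moments M (D n)" by (rule mart_diff_finite_moments[OF assms])
  have "expectation (\<lambda>\<omega>. (\<Sum>i<Suc n. D i \<omega>)^2)
      = expectation (\<lambda>\<omega>. ?S \<omega>^2 + 2 * (?S \<omega> * D n \<omega>) + D n \<omega>^2)"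
    by (intro Bochner_Integration.integral_cong refl) (simp add: power2_eq_square algebra_simps)
  also have "\<dots> = expectation (\<lambda>\<omega>. ?S \<omega>^2) + 2 * expectation (\<lambda>\<omega>. ?S \<omega> * D n \<omega>)
      + expectation (\<lambda>\<omega>. D n \<omega>^2)"
    using mS mD by (simp add: finite_moments_integrable finite_moments_mult finite_moments_power)
  also have "expectation (\<lambda>\<omega>. ?S \<omega> * D n \<omega>) = 0"
    by (rule mart_diff_orthogonal[OF assms adapted_sum_mart_diff[OF assms] mS]) simp
  finally show ?case using Suc by simp
qed

lemma adapted_first_exceed:
  assumes "\<And>l. l \<le> k \<Longrightarrow> adapted k (S l)"
  shows "adapted k (\<lambda>\<omega>. first_exceed a (\<lambda>l. S l \<omega>) k)"
  unfolding first_exceed_eq_prod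
  by (intro adapted_mult adapted_prod adapted_compose[OF assms]
    borel_measurable_threshold_indicators) auto

lemma expectation_sq_sum_mart_diff_mono:
  assumes md: "\<And>i. mart_diff i (D i)" and H: "adapted k H" "finite_moments M H"
    and H_nonneg: "\<And>\<omega>. \<omega> \<in> space M \<Longrightarrow> 0 \<le> H \<omega>" and "k \<le> n"
  shows "expectation (\<lambda>\<omega>. (\<Sum>i<k. D i \<omega>)^2 * H \<omega>) \<le> expectation (\<lambda>\<omega>. (\<Sum>i<n. D i \<omega>)^2 * H \<omega>)"
proof -
  define S where "S \<omega> = (\<Sum>i<k. D i \<omega>)" for \<omega>
  define R where "R \<omega> = (\<Sum>i\<in>{k..<n}. D i \<omega>)" for \<omega>
  have un: "{..<n} = {..<k} \<union> {k..<n}" using \<open>k \<le> n\<close> by auto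
  have split: "(\<Sum>i<n. D i \<omega>) = S \<omega> + R \<omega>" for \<omega>
    unfolding S_def R_def un by (subst sum.union_disjoint) auto
  have mS: "finite_moments M S" unfolding S_def[abs_def]
    by (rule finite_moments_sum_mart_diff[OF md])
  have mR: "finite_moments M R" unfolding R_def[abs_def]
    by (rule finite_moments_sum_mart_diff[OF md])
  have mSH: "finite_moments M (\<lambda>\<omega>. S \<omega> * H \<omega>)" by (intro finite_moments_mult mS H(2))
  have adSH: "adapted i (\<lambda>\<omega>. S \<omega> * H \<omega>)" if "k \<le> i" for i
    unfolding S_def[abs_def]
    by (intro adapted_mono[OF _ that] adapted_mult adapted_sum_mart_diff[OF md] H(1)) simp
  have cross: "expectation (\<lambda>\<omega>. (S \<omega> * H \<omega>) * R \<omega>) = 0"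
  proof -
    have "expectation (\<lambda>\<omega>. (S \<omega> * H \<omega>) * R \<omega>)
        = (\<Sum>i\<in>{k..<n}. expectation (\<lambda>\<omega>. (S \<omega> * H \<omega>) * D i \<omega>))"
      unfolding R_def sum_distrib_left
      by (intro Bochner_Integration.integral_sum finite_moments_integrable finite_moments_mult mSH
          mart_diff_finite_moments[OF md])
    also have "\<dots> = 0"
      by (intro sum.neutral ballI mart_diff_orthogonal[OF md adSH mSH]) auto
    finally show ?thesis .
  qed
  have "expectation (\<lambda>\<omega>. (\<Sum>i<n. D i \<omega>)^2 * H \<omega>)
      = expectation (\<lambda>\<omega>. S \<omega>^2 * H \<omega> + R \<omega>^2 * H \<omega> + 2 * ((S \<omega> * H \<omega>) * R \<omega>))"
    by (intro Bochner_Integration.integral_cong refl)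
      (simp add: split power2_eq_square algebra_simps)
  also have "\<dots> = expectation (\<lambda>\<omega>. S \<omega>^2 * H \<omega>) + expectation (\<lambda>\<omega>. R \<omega>^2 * H \<omega>)
      + 2 * expectation (\<lambda>\<omega>. (S \<omega> * H \<omega>) * R \<omega>)"
    using mS mR mSH H(2)
    by (simp add: finite_moments_integrable finite_moments_mult finite_moments_power)
  finally have eq: "expectation (\<lambda>\<omega>. (\<Sum>i<n. D i \<omega>)^2 * H \<omega>)
      = expectation (\<lambda>\<omega>. S \<omega>^2 * H \<omega>) + expectation (\<lambda>\<omega>. R \<omega>^2 * H \<omega>)"
    using cross by simp
  have "0 \<le> expectation (\<lambda>\<omega>. R \<omega>^2 * H \<omega>)"
    by (intro Bochner_Integration.integral_nonneg mult_nonneg_nonneg H_nonneg) auto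
  then show ?thesis using eq by (simp add: S_def)
qed

lemma kolmogorov_maximal_ineq:
  assumes md: "\<And>i. mart_diff i (D i)" and a: "0 < a"
  shows "measure M {\<omega>\<in>space M. \<exists>k\<le>n. a \<le> \<bar>\<Sum>i<k. D i \<omega>\<bar>}
           \<le> expectation (\<lambda>\<omega>. (\<Sum>i<n. D i \<omega>)^2) / a^2"
proof -
  define S where "S k \<omega> = (\<Sum>i<k. D i \<omega>)" for k \<omega>
  define I where "I k \<omega> = first_exceed a (\<lambda>l. S l \<omega>) k" for k \<omega>
  have mS: "finite_moments M (S k)" for k
    unfolding S_def[abs_def] by (rule finite_moments_sum_mart_diff[OF md])
  have [measurable]: "S k \<in> borel_measurable M" for k using mS by (rule finite_moments_measurable)
  have adI: "adapted k (I k)" for k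
    unfolding I_def S_def using adapted_sum_mart_diff[OF md] by (rule adapted_first_exceed)
  have mI: "finite_moments M (I k)" for k
    by (rule finite_moments_bounded[OF adapted_measurable[OF adI], of _ 1])
      (simp add: I_def abs_first_exceed_le_1)
  have mSnI: "finite_moments M (\<lambda>\<omega>. S n \<omega>^2 * I k \<omega>)" for k
    by (intro finite_moments_mult finite_moments_power mS mI)
  define E where "E = {\<omega>\<in>space M. \<exists>k\<le>n. a \<le> \<bar>S k \<omega>\<bar>}"
  have [measurable]: "E \<in> sets M" unfolding E_def by measurable
  have sum_I: "(\<Sum>k\<le>n. I k \<omega>) = indicator E \<omega>" if "\<omega> \<in> space M" for \<omega>
    using that by (simp add: I_def E_def sum_first_exceed indicator_def)
  have "a^2 * measure M E = a^2 * expectation (indicator E)" by simp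
  also have "expectation (indicator E) = expectation (\<lambda>\<omega>. \<Sum>k\<le>n. I k \<omega>)"
    using sum_I by (intro Bochner_Integration.integral_cong) auto
  also have "\<dots> = (\<Sum>k\<le>n. expectation (I k))"
    by (intro Bochner_Integration.integral_sum finite_moments_integrable mI)
  also have "a^2 * \<dots> = (\<Sum>k\<le>n. expectation (\<lambda>\<omega>. a^2 * I k \<omega>))"
    by (simp add: sum_distrib_left)
  also have "\<dots> \<le> (\<Sum>k\<le>n. expectation (\<lambda>\<omega>. S k \<omega>^2 * I k \<omega>))"
    using a unfolding I_def
    by (intro sum_mono Bochner_Integration.integral_mono sq_mult_first_exceed_le)
      (simp_all add: finite_moments_integrable finite_moments_mult finite_moments_power mS
        mI[unfolded I_def])
  also have "\<dots> \<le> (\<Sum>k\<le>n. expectation (\<lambda>\<omega>. S n \<omega>^2 * I k \<omega>))"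
    unfolding S_def
    by (intro sum_mono expectation_sq_sum_mart_diff_mono[OF md adI mI])
      (simp_all add: I_def first_exceed_nonneg)
  also have "\<dots> = expectation (\<lambda>\<omega>. \<Sum>k\<le>n. S n \<omega>^2 * I k \<omega>)"
    by (intro Bochner_Integration.integral_sum[symmetric] finite_moments_integrable mSnI)
  also have "\<dots> = expectation (\<lambda>\<omega>. S n \<omega>^2 * indicator E \<omega>)"
    using sum_I by (intro Bochner_Integration.integral_cong) (auto simp flip: sum_distrib_left)
  also have "\<dots> \<le> expectation (\<lambda>\<omega>. S n \<omega>^2)"
  proof (rule Bochner_Integration.integral_mono)
    show "integrable M (\<lambda>\<omega>. S n \<omega>^2 * indicator E \<omega>)"
      using mS
      by (intro integrable_real_mult_indicator)
        (simp_all add: finite_moments_integrable finite_moments_power)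
    show "integrable M (\<lambda>\<omega>. S n \<omega>^2)" using mS
      by (simp add: finite_moments_integrable finite_moments_power)
  qed (auto simp: indicator_def)
  finally show ?thesis using a unfolding S_def E_def by (simp add: pos_le_divide_eq mult.commute)
qed

end

section \<open>The squared radius |W|^2\<close>

context bm_grid
begin

lemma finite_moments_Wgrid: "finite_moments M (Wgrid b k)"
  by (rule finite_moments_cong[OF finite_moments_sum[of "{..<k}" "\<lambda>l. incr l b"]])
    (auto simp: finite_moments_incr Wgrid_eq_sum_incr)

lemma mart_diff_scaled_incr: "mart_diff i (\<lambda>\<omega>. c * incr i b \<omega>)"
  using mart_diff_mult_incr[OF adapted_const finite_moments_const, of i c b] by simp

lemma expectation_Wgrid_diff_sq:
  assumes "l \<le> j"
  shows "expectation (\<lambda>\<omega>. (Wgrid b j \<omega> - Wgrid b l \<omega>)^2) = real (j - l) * \<eta>"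
proof -
  define D where "D i \<omega> = (if l \<le> i then 1 else 0) * incr i b \<omega>" for i \<omega>
  have md: "mart_diff i (D i)" for i unfolding D_def[abs_def] by (rule mart_diff_scaled_incr)
  have un: "{..<j} = {..<l} \<union> {l..<j}" using assms by auto
  have e1: "(\<Sum>i<j. D i \<omega>) = Wgrid b j \<omega> - Wgrid b l \<omega>" if "\<omega> \<in> space M" for \<omega>
  proof -
    have "(\<Sum>i<j. D i \<omega>) = (\<Sum>i\<in>{l..<j}. incr i b \<omega>)"
      unfolding un D_def by (subst sum.union_disjoint) auto
    also have "\<dots> = (\<Sum>i<j. incr i b \<omega>) - (\<Sum>i<l. incr i b \<omega>)"
      unfolding un by (subst sum.union_disjoint) auto
    finally show ?thesis using that by (simp add: Wgrid_eq_sum_incr)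
  qed
  have "expectation (\<lambda>\<omega>. (Wgrid b j \<omega> - Wgrid b l \<omega>)^2) = expectation (\<lambda>\<omega>. (\<Sum>i<j. D i \<omega>)^2)"
    using e1 by (intro Bochner_Integration.integral_cong) auto
  also have "\<dots> = (\<Sum>i<j. expectation (\<lambda>\<omega>. D i \<omega> ^ 2))" by (rule expectation_sum_mart_diff_sq[OF md])
  also have "\<dots> = (\<Sum>i<j. if l \<le> i then \<eta> else 0)"
    by (intro sum.cong refl) (simp add: D_def expectation_incr_sq power_mult_distrib)
  also have "\<dots> = (\<Sum>i\<in>{l..<j}. \<eta>)"
    unfolding un by (subst sum.union_disjoint) auto
  finally show ?thesis using assms by simp
qed

lemma expectation_Wgrid_sq: "expectation (\<lambda>\<omega>. (Wgrid b k \<omega>)^2) = real k * \<eta>"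
proof -
  have "expectation (\<lambda>\<omega>. (Wgrid b k \<omega>)^2) = expectation (\<lambda>\<omega>. (Wgrid b k \<omega> - Wgrid b 0 \<omega>)^2)"
    by (intro Bochner_Integration.integral_cong) (auto simp: coord_zero)
  then show ?thesis using expectation_Wgrid_diff_sq[of 0 k b] by simp
qed

lemma expectation_mult_incr_sq:
  assumes "adapted i H" "finite_moments M H"
  shows "expectation (\<lambda>\<omega>. (H \<omega> * incr i b \<omega>)^2) = expectation (\<lambda>\<omega>. H \<omega>^2) * \<eta>"
proof -
  have "expectation (\<lambda>\<omega>. (H \<omega> * incr i b \<omega>)^2) = expectation (\<lambda>\<omega>. H \<omega>^2 * (\<lambda>x. x^2) (incr i b \<omega>))"
    by (simp add: power_mult_distrib)
  also have "\<dots> = expectation (\<lambda>\<omega>. H \<omega>^2) * expectation (\<lambda>\<omega>. incr i b \<omega>^2)"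
    by (rule expectation_adapted_mult_incr)
      (use assms in
        \<open>auto intro: adapted_compose[where f="\<lambda>x. x^2"] finite_moments_power finite_moments_incr\<close>)
  finally show ?thesis by (simp add: expectation_incr_sq)
qed

lemma expectation_incr_sq_centered_sq: "expectation (\<lambda>\<omega>. (incr i b \<omega>^2 - \<eta>)^2) = 2 * \<eta>^2"
proof -
  have "expectation (\<lambda>\<omega>. (incr i b \<omega>^2 - \<eta>)^2)
      = expectation (\<lambda>\<omega>. incr i b \<omega>^4 - 2 * \<eta> * incr i b \<omega>^2 + \<eta>^2)"
    by (intro Bochner_Integration.integral_cong refl)
      (simp add: power2_eq_square algebra_simps power_numeral_reduce)
  also have "\<dots> = expectation (\<lambda>\<omega>. incr i b \<omega>^4) - 2 * \<eta> * expectation (\<lambda>\<omega>. incr i b \<omega>^2) + \<eta>^2"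
    using finite_moments_integrable[OF finite_moments_power[OF finite_moments_incr[of i b]]]
    by (simp add: prob_space)
  also have "\<dots> = 3 * \<eta>^2 - 2 * \<eta> * \<eta> + \<eta>^2"
    by (simp add: expectation_incr_sq expectation_incr_power4)
  finally show ?thesis by (simp add: power2_eq_square)
qed

definition radius_incr :: "nat \<Rightarrow> 'a \<Rightarrow> real" where
  "radius_incr i \<omega> = (2 * Wgrid False i \<omega> * incr i False \<omega> + (incr i False \<omega>^2 - \<eta>)) +
              (2 * Wgrid True i \<omega> * incr i True \<omega> + (incr i True \<omega>^2 - \<eta>))"

lemma mart_diff_Wgrid_incr: "mart_diff i (\<lambda>\<omega>. 2 * Wgrid b i \<omega> * incr i b \<omega>)"
  using mart_diff_mult_incr[of i "\<lambda>\<omega>. 2 * Wgrid b i \<omega>" b]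
  by (simp add: adapted_mult adapted_const adapted_Wgrid finite_moments_scale finite_moments_Wgrid)

lemma mart_diff_radius_incr: "mart_diff i (radius_incr i)"
  unfolding radius_incr_def[abs_def] by (intro mart_diff_add mart_diff_Wgrid_incr mart_diff_incr_sq)

lemma sum_radius_incr: "\<omega> \<in> space M \<Longrightarrow> (\<Sum>i<k. radius_incr i \<omega>)
    = Wgrid False k \<omega>^2 + Wgrid True k \<omega>^2 - 2 * real k * \<eta>"
proof (induction k)
  case 0 then show ?case by (simp add: coord_zero)
next
  case (Suc k)
  have "(\<Sum>i<Suc k. radius_incr i \<omega>) = (\<Sum>i<k. radius_incr i \<omega>) + radius_incr k \<omega>" by simp
  also have "\<dots> = Wgrid False k \<omega>^2 + Wgrid True k \<omega>^2 - 2 * real k * \<eta> + radius_incr k \<omega>" using Suc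
    by simp
  also have "\<dots> = Wgrid False (Suc k) \<omega>^2 + Wgrid True (Suc k) \<omega>^2 - 2 * real (Suc k) * \<eta>"
    unfolding Wgrid_Suc radius_incr_def by (simp add: power2_eq_square algebra_simps)
  finally show ?case .
qed

lemma expectation_Wgrid_incr_sq: "expectation (\<lambda>\<omega>. (2 * Wgrid b i \<omega> * incr i b \<omega>)^2)
    = 4 * real i * \<eta> * \<eta>"
proof -
  have "expectation (\<lambda>\<omega>. ((2 * Wgrid b i \<omega>) * incr i b \<omega>)^2)
      = expectation (\<lambda>\<omega>. (2 * Wgrid b i \<omega>)^2) * \<eta>"
    by (rule expectation_mult_incr_sq)
      (auto intro: adapted_mult adapted_const adapted_Wgrid finite_moments_scale
        finite_moments_Wgrid)
  also have "expectation (\<lambda>\<omega>. (2 * Wgrid b i \<omega>)^2) = 4 * expectation (\<lambda>\<omega>. (Wgrid b i \<omega>)^2)"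
    by (simp add: power_mult_distrib)
  finally show ?thesis by (simp add: expectation_Wgrid_sq)
qed

lemma expectation_radius_incr_sq: "expectation (\<lambda>\<omega>. radius_incr i \<omega>^2)
    \<le> 32 * real i * \<eta>^2 + 16 * \<eta>^2"
proof -
  let ?a = "\<lambda>\<omega>. 2 * Wgrid False i \<omega> * incr i False \<omega>"
  let ?b = "\<lambda>\<omega>. incr i False \<omega>^2 - \<eta>"
  let ?c = "\<lambda>\<omega>. 2 * Wgrid True i \<omega> * incr i True \<omega>"
  let ?d = "\<lambda>\<omega>. incr i True \<omega>^2 - \<eta>"
  have ma: "finite_moments M ?a" "finite_moments M ?c"
    using mart_diff_finite_moments[OF mart_diff_Wgrid_incr] by auto
  have mb: "finite_moments M ?b" "finite_moments M ?d"
    using mart_diff_finite_moments[OF mart_diff_incr_sq] by auto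
  have ineq: "(a + b + (c + d))^2 \<le> 4 * (a^2 + b^2 + c^2 + d^2)" for a b c d :: real
  proof -
    have "0 \<le> (a-b)^2 + (a-c)^2 + (a-d)^2 + (b-c)^2 + (b-d)^2 + (c-d)^2" by simp
    then show ?thesis by (simp add: power2_eq_square algebra_simps)
  qed
  have "expectation (\<lambda>\<omega>. radius_incr i \<omega>^2)
      \<le> expectation (\<lambda>\<omega>. 4 * (?a \<omega>^2 + ?b \<omega>^2 + ?c \<omega>^2 + ?d \<omega>^2))"
  proof (rule Bochner_Integration.integral_mono)
    show "integrable M (\<lambda>\<omega>. radius_incr i \<omega>^2)"
      using mart_diff_finite_moments[OF mart_diff_radius_incr]
      by (simp add: finite_moments_integrable finite_moments_power)
    show "integrable M (\<lambda>\<omega>. 4 * (?a \<omega>^2 + ?b \<omega>^2 + ?c \<omega>^2 + ?d \<omega>^2))"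
      using ma mb by (simp add: finite_moments_integrable finite_moments_power)
    fix \<omega> show "radius_incr i \<omega>^2 \<le> 4 * (?a \<omega>^2 + ?b \<omega>^2 + ?c \<omega>^2 + ?d \<omega>^2)"
      unfolding radius_incr_def by (rule ineq)
  qed
  also have "\<dots> = 4 * (expectation (\<lambda>\<omega>. ?a \<omega>^2) + expectation (\<lambda>\<omega>. ?b \<omega>^2)
      + expectation (\<lambda>\<omega>. ?c \<omega>^2) + expectation (\<lambda>\<omega>. ?d \<omega>^2))"
    using ma mb by (simp add: finite_moments_integrable finite_moments_power)
  also have "\<dots> = 4 * (4 * real i * \<eta> * \<eta> + 2 * \<eta>^2 + 4 * real i * \<eta> * \<eta> + 2 * \<eta>^2)"
    by (simp only: expectation_Wgrid_incr_sq expectation_incr_sq_centered_sq)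
  finally show ?thesis by (simp add: power2_eq_square algebra_simps)
qed

lemma radius_incr_measurable[measurable]: "radius_incr i \<in> borel_measurable M"
  using mart_diff_finite_moments[OF mart_diff_radius_incr] by (rule finite_moments_measurable)

lemma Wgrid_max_tail:
  assumes N: "1 \<le> N" and mu: "2 * real N * \<eta> < \<mu>"
  shows "measure M {\<omega>\<in>space M. \<exists>k\<le>N. \<mu> < Wgrid False k \<omega>^2 + Wgrid True k \<omega>^2}
           \<le> 48 * (real N * \<eta>)^2 / (\<mu> - 2 * real N * \<eta>)^2"
proof -
  define c where "c = \<mu> - 2 * real N * \<eta>"
  have c: "0 < c" using mu by (simp add: c_def)
  have sub: "{\<omega>\<in>space M. \<exists>k\<le>N. \<mu> < Wgrid False k \<omega>^2 + Wgrid True k \<omega>^2}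
      \<subseteq> {\<omega>\<in>space M. \<exists>k\<le>N. c \<le> \<bar>\<Sum>i<k. radius_incr i \<omega>\<bar>}"
  proof safe
    fix \<omega> k assume \<omega>: "\<omega> \<in> space M" and k: "k \<le> N"
      and lt: "\<mu> < Wgrid False k \<omega>^2 + Wgrid True k \<omega>^2"
    have "real k * \<eta> \<le> real N * \<eta>" using k eta by (intro mult_right_mono) auto
    then have "c \<le> (\<Sum>i<k. radius_incr i \<omega>)" using lt sum_radius_incr[OF \<omega>, of k]
      by (simp add: c_def)
    then show "\<exists>k\<le>N. c \<le> \<bar>\<Sum>i<k. radius_incr i \<omega>\<bar>" using k by force
  qed
  have "measure M {\<omega>\<in>space M. \<exists>k\<le>N. \<mu> < Wgrid False k \<omega>^2 + Wgrid True k \<omega>^2}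
      \<le> measure M {\<omega>\<in>space M. \<exists>k\<le>N. c \<le> \<bar>\<Sum>i<k. radius_incr i \<omega>\<bar>}"
    by (rule finite_measure_mono[OF sub]) measurable
  also have "\<dots> \<le> expectation (\<lambda>\<omega>. (\<Sum>i<N. radius_incr i \<omega>)^2) / c^2"
    by (rule kolmogorov_maximal_ineq[OF mart_diff_radius_incr c])
  also have "expectation (\<lambda>\<omega>. (\<Sum>i<N. radius_incr i \<omega>)^2)
      = (\<Sum>i<N. expectation (\<lambda>\<omega>. radius_incr i \<omega>^2))"
    by (rule expectation_sum_mart_diff_sq[OF mart_diff_radius_incr])
  also have "\<dots> \<le> (\<Sum>i<N. 48 * real N * \<eta>^2)"
  proof (rule sum_mono)
    fix i assume "i \<in> {..<N}"
    then have "32 * real i + 16 \<le> 48 * real N" using N by simp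
    then have "(32 * real i + 16) * \<eta>^2 \<le> (48 * real N) * \<eta>^2" by (intro mult_right_mono) auto
    then show "expectation (\<lambda>\<omega>. radius_incr i \<omega>^2) \<le> 48 * real N * \<eta>^2"
      using expectation_radius_incr_sq[of i] by (simp add: algebra_simps)
  qed
  also have "(\<Sum>i<N. 48 * real N * \<eta>^2) = 48 * (real N * \<eta>)^2" by (simp add: power2_eq_square)
  finally show ?thesis using c by (simp add: c_def divide_right_mono)
qed

end

section \<open>Riemann sums of the Levy area\<close>

lemma sum_nat_blocks:
  fixes g :: "nat \<Rightarrow> nat \<Rightarrow> 'a::comm_monoid_add"
  shows "(\<Sum>q<Q. \<Sum>r<c. g q (c*q + r)) = (\<Sum>i<c*Q. g (i div c) i)"
proof (cases "c = 0")
  case False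
  have "(\<Sum>i<c*Q. g (i div c) i) = (\<Sum>i<Q*c. g (i div c) i)" by (simp add: mult.commute)
  also have "\<dots> = (\<Sum>q<Q. \<Sum>i\<in>{q*c..<q*c+c}. g (i div c) i)"
    by (rule sum.nat_group[symmetric])
  also have "\<dots> = (\<Sum>q<Q. \<Sum>r<c. g q (c*q + r))"
  proof (rule sum.cong[OF refl])
    fix q
    have "(\<Sum>i\<in>{q*c..<q*c+c}. g (i div c) i) = (\<Sum>i\<in>{0+q*c..<c+q*c}. g (i div c) i)"
      by (simp add: add.commute)
    also have "\<dots> = (\<Sum>r\<in>{0..<c}. g ((r + q*c) div c) (r + q*c))"
      by (rule sum.shift_bounds_nat_ivl)
    also have "\<dots> = (\<Sum>r<c. g q (c*q + r))"
      using False by (intro sum.cong) (auto simp: atLeast0LessThan ac_simps)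
    finally show "(\<Sum>i\<in>{q*c..<q*c+c}. g (i div c) i) = (\<Sum>r<c. g q (c*q + r))" .
  qed
  finally show ?thesis by simp
qed simp

context bm_grid
begin

text \<open>The left-point Riemann sum of the Levy area on the coarse grid of mesh \<open>c\<eta>\<close>, split
  into fine steps: over the fine step \<open>i\<close> the integrand is frozen at the preceding coarse
  grid point \<open>c * (i div c)\<close>.\<close>

definition area_incr :: "nat \<Rightarrow> nat \<Rightarrow> 'a \<Rightarrow> real" where
  "area_incr c i \<omega> = (1/2) * (Wgrid False (c * (i div c)) \<omega> * incr i True \<omega>
      - Wgrid True (c * (i div c)) \<omega> * incr i False \<omega>)"

lemma levy_riemann_eq_sum_area_incr:
  "levy_riemann W1 W2 (real (c * 2^m) * \<eta>) m \<omega> = (\<Sum>i<c * 2^m. area_incr c i \<omega>)"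
proof -
  have pt: "real (c * 2^m) * \<eta> * real i / 2^m = real (c * i) * \<eta>" for i
    by (simp add: field_simps)
  have pt': "real (c * 2^m) * \<eta> * real (Suc i) / 2^m = real (c * i + c) * \<eta>" for i
    by (simp add: field_simps)
  have "levy_riemann W1 W2 (real (c * 2^m) * \<eta>) m \<omega> = (1/2) * (\<Sum>q<2^m.
      Wgrid False (c*q) \<omega> * (Wgrid True (c*q + c) \<omega> - Wgrid True (c*q) \<omega>)
      - Wgrid True (c*q) \<omega> * (Wgrid False (c*q + c) \<omega> - Wgrid False (c*q) \<omega>))"
    unfolding levy_riemann_def Let_def pt pt' by (simp add: coord_def add.commute)
  also have "\<dots> = (1/2) * (\<Sum>q<2^m. \<Sum>r<c.
      Wgrid False (c*q) \<omega> * incr (c*q + r) True \<omega>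
      - Wgrid True (c*q) \<omega> * incr (c*q + r) False \<omega>)"
    by (unfold Wgrid_add_diff) (simp add: sum_distrib_left sum_subtractf)
  also have "(\<Sum>q<2^m. \<Sum>r<c. Wgrid False (c*q) \<omega> * incr (c*q + r) True \<omega>
        - Wgrid True (c*q) \<omega> * incr (c*q + r) False \<omega>)
      = (\<Sum>i<c*2^m. Wgrid False (c*(i div c)) \<omega> * incr i True \<omega>
        - Wgrid True (c*(i div c)) \<omega> * incr i False \<omega>)"
    by (rule sum_nat_blocks[where g="\<lambda>q i. Wgrid False (c*q) \<omega> * incr i True \<omega>
        - Wgrid True (c*q) \<omega> * incr i False \<omega>"])
  finally show ?thesis by (simp add: area_incr_def sum_distrib_left)
qed

lemma mart_diff_area_incr: "mart_diff i (area_incr c i)"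
proof -
  have ad: "adapted i (Wgrid b (c * (i div c)))" for b
    by (rule adapted_mono[OF adapted_Wgrid]) (simp add: times_div_less_eq_dividend)
  have "mart_diff i (\<lambda>\<omega>. (1/2) * (Wgrid False (c * (i div c)) \<omega> * incr i True \<omega>
      - Wgrid True (c * (i div c)) \<omega> * incr i False \<omega>))"
    by (intro mart_diff_scale mart_diff_diff mart_diff_mult_incr ad finite_moments_Wgrid)
  then show ?thesis unfolding area_incr_def[abs_def] .
qed

lemma area_incr_measurable[measurable]: "area_incr c i \<in> borel_measurable M"
  using mart_diff_finite_moments[OF mart_diff_area_incr] by (rule finite_moments_measurable)

lemma expectation_area_form_sq:
  assumes "adapted i H1" "finite_moments M H1" "adapted i H2" "finite_moments M H2"
  shows "expectation (\<lambda>\<omega>. ((1/2) * (H1 \<omega> * incr i True \<omega> - H2 \<omega> * incr i False \<omega>))^2)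
           \<le> (1/2) * (expectation (\<lambda>\<omega>. H1 \<omega>^2) + expectation (\<lambda>\<omega>. H2 \<omega>^2)) * \<eta>"
proof -
  have m1: "finite_moments M (\<lambda>\<omega>. H1 \<omega> * incr i True \<omega>)"
    by (intro finite_moments_mult assms finite_moments_incr)
  have m2: "finite_moments M (\<lambda>\<omega>. H2 \<omega> * incr i False \<omega>)"
    by (intro finite_moments_mult assms finite_moments_incr)
  have ineq: "((1/2) * (x - y))^2 \<le> (1/2) * (x^2 + y^2)" for x y :: real
  proof -
    have "0 \<le> (x + y)^2" by simp
    then show ?thesis by (simp add: power2_eq_square algebra_simps)
  qed
  have "expectation (\<lambda>\<omega>. ((1/2) * (H1 \<omega> * incr i True \<omega> - H2 \<omega> * incr i False \<omega>))^2)
      \<le> expectation (\<lambda>\<omega>. (1/2) * ((H1 \<omega> * incr i True \<omega>)^2 + (H2 \<omega> * incr i False \<omega>)^2))"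
  proof (rule Bochner_Integration.integral_mono)
    show "integrable M (\<lambda>\<omega>. ((1/2) * (H1 \<omega> * incr i True \<omega> - H2 \<omega> * incr i False \<omega>))^2)"
      using m1 m2
      by (intro finite_moments_integrable finite_moments_power finite_moments_scale
        finite_moments_diff)
    show "integrable M (\<lambda>\<omega>. (1/2) * ((H1 \<omega> * incr i True \<omega>)^2 + (H2 \<omega> * incr i False \<omega>)^2))"
      using m1 m2
      by (intro finite_moments_integrable finite_moments_scale finite_moments_add
        finite_moments_power)
  qed (rule ineq)
  also have "\<dots> = (1/2) * (expectation (\<lambda>\<omega>. (H1 \<omega> * incr i True \<omega>)^2)
      + expectation (\<lambda>\<omega>. (H2 \<omega> * incr i False \<omega>)^2))"
    using m1 m2 by (simp add: finite_moments_integrable finite_moments_power)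
  also have "\<dots> = (1/2) * (expectation (\<lambda>\<omega>. H1 \<omega>^2) * \<eta> + expectation (\<lambda>\<omega>. H2 \<omega>^2) * \<eta>)"
    using assms by (simp add: expectation_mult_incr_sq)
  finally show ?thesis by (simp add: algebra_simps)
qed

lemma expectation_fine_area_incr_sq: "expectation (\<lambda>\<omega>. area_incr 1 i \<omega>^2) \<le> real i * \<eta>^2"
proof -
  have "expectation (\<lambda>\<omega>. area_incr 1 i \<omega>^2)
      = expectation (\<lambda>\<omega>. ((1/2) * (Wgrid False i \<omega> * incr i True \<omega>
        - Wgrid True i \<omega> * incr i False \<omega>))^2)"
    by (simp add: area_incr_def)
  also have "\<dots> \<le> (1/2) * (expectation (\<lambda>\<omega>. Wgrid False i \<omega>^2)
      + expectation (\<lambda>\<omega>. Wgrid True i \<omega>^2)) * \<eta>"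
    by (intro expectation_area_form_sq adapted_Wgrid finite_moments_Wgrid)
  also have "\<dots> = (1/2) * (real i * \<eta> + real i * \<eta>) * \<eta>" by (simp only: expectation_Wgrid_sq)
  also have "\<dots> = real i * \<eta>^2" by (simp add: power2_eq_square)
  finally show ?thesis .
qed

lemma expectation_area_incr_diff_sq:
  assumes c: "1 \<le> c"
  shows "expectation (\<lambda>\<omega>. (area_incr c i \<omega> - area_incr 1 i \<omega>)^2) \<le> real c * \<eta>^2"
proof -
  define a where "a = c * (i div c)"
  have ai: "a \<le> i" unfolding a_def by (simp add: times_div_less_eq_dividend)
  have ia: "i - a < c" unfolding a_def using c
    by (metis minus_mult_div_eq_mod mod_less_divisor mult.commute not_one_le_zero
      zero_less_iff_neq_zero)
  have ad: "adapted i (\<lambda>\<omega>. Wgrid b a \<omega> - Wgrid b i \<omega>)" for b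
    by (intro adapted_diff adapted_mono[OF adapted_Wgrid] ai order_refl)
  have md: "finite_moments M (\<lambda>\<omega>. Wgrid b a \<omega> - Wgrid b i \<omega>)" for b
    by (intro finite_moments_diff finite_moments_Wgrid)
  have Eb: "expectation (\<lambda>\<omega>. (Wgrid b a \<omega> - Wgrid b i \<omega>)^2) = real (i - a) * \<eta>" for b
  proof -
    have "expectation (\<lambda>\<omega>. (Wgrid b a \<omega> - Wgrid b i \<omega>)^2)
        = expectation (\<lambda>\<omega>. (Wgrid b i \<omega> - Wgrid b a \<omega>)^2)"
      by (simp add: power2_commute)
    then show ?thesis using expectation_Wgrid_diff_sq[OF ai] by simp
  qed
  have "expectation (\<lambda>\<omega>. (area_incr c i \<omega> - area_incr 1 i \<omega>)^2)
      = expectation (\<lambda>\<omega>. ((1/2) * ((Wgrid False a \<omega> - Wgrid False i \<omega>) * incr i True \<omega>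
        - (Wgrid True a \<omega> - Wgrid True i \<omega>) * incr i False \<omega>))^2)"
    by (intro Bochner_Integration.integral_cong refl) (simp add: area_incr_def a_def algebra_simps)
  also have "\<dots> \<le> (1/2) * (expectation (\<lambda>\<omega>. (Wgrid False a \<omega> - Wgrid False i \<omega>)^2)
      + expectation (\<lambda>\<omega>. (Wgrid True a \<omega> - Wgrid True i \<omega>)^2)) * \<eta>"
    by (intro expectation_area_form_sq ad md)
  also have "\<dots> = (1/2) * (real (i - a) * \<eta> + real (i - a) * \<eta>) * \<eta>" by (simp only: Eb)
  also have "\<dots> = real (i - a) * \<eta>^2" by (simp add: power2_eq_square)
  also have "\<dots> \<le> real c * \<eta>^2" using ia by (intro mult_right_mono) auto
  finally show ?thesis .
qed

lemma fine_area_max_tail: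
  assumes x: "0 < x"
  shows "measure M {\<omega>\<in>space M. \<exists>k\<le>N. x \<le> \<bar>\<Sum>i<k. area_incr 1 i \<omega>\<bar>} \<le> (real N * \<eta>)^2 / x^2"
proof -
  have "measure M {\<omega>\<in>space M. \<exists>k\<le>N. x \<le> \<bar>\<Sum>i<k. area_incr 1 i \<omega>\<bar>}
      \<le> expectation (\<lambda>\<omega>. (\<Sum>i<N. area_incr 1 i \<omega>)^2) / x^2"
    by (rule kolmogorov_maximal_ineq[OF mart_diff_area_incr x])
  also have "expectation (\<lambda>\<omega>. (\<Sum>i<N. area_incr 1 i \<omega>)^2)
      = (\<Sum>i<N. expectation (\<lambda>\<omega>. area_incr 1 i \<omega>^2))"
    by (rule expectation_sum_mart_diff_sq[OF mart_diff_area_incr])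
  also have "\<dots> \<le> (\<Sum>i<N. real N * \<eta>^2)"
  proof (rule sum_mono)
    fix i assume "i \<in> {..<N}"
    then have "real i * \<eta>^2 \<le> real N * \<eta>^2" by (intro mult_right_mono) auto
    then show "expectation (\<lambda>\<omega>. area_incr 1 i \<omega>^2) \<le> real N * \<eta>^2"
      using expectation_fine_area_incr_sq[of i] by linarith
  qed
  also have "(\<Sum>i<N. real N * \<eta>^2) = (real N * \<eta>)^2" by (simp add: power2_eq_square)
  finally show ?thesis using x by (simp add: divide_right_mono)
qed

lemma area_sum_diff_tail:
  assumes c: "1 \<le> c" and x: "0 < x"
  shows "measure M {\<omega>\<in>space M. x \<le> \<bar>(\<Sum>i<K. area_incr c i \<omega>) - (\<Sum>i<K. area_incr 1 i \<omega>)\<bar>}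
      \<le> real K * real c * \<eta>^2 / x^2"
proof -
  have md: "mart_diff i (\<lambda>\<omega>. area_incr c i \<omega> - area_incr 1 i \<omega>)" for i
    by (intro mart_diff_diff mart_diff_area_incr)
  have "measure M {\<omega>\<in>space M. x \<le> \<bar>(\<Sum>i<K. area_incr c i \<omega>) - (\<Sum>i<K. area_incr 1 i \<omega>)\<bar>}
      \<le> measure M {\<omega>\<in>space M. \<exists>k\<le>K. x \<le> \<bar>\<Sum>i<k. area_incr c i \<omega> - area_incr 1 i \<omega>\<bar>}"
    by (rule finite_measure_mono) (auto simp: sum_subtractf)
  also have "\<dots> \<le> expectation (\<lambda>\<omega>. (\<Sum>i<K. area_incr c i \<omega> - area_incr 1 i \<omega>)^2) / x^2"
    by (rule kolmogorov_maximal_ineq[OF md x])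
  also have "expectation (\<lambda>\<omega>. (\<Sum>i<K. area_incr c i \<omega> - area_incr 1 i \<omega>)^2)
      = (\<Sum>i<K. expectation (\<lambda>\<omega>. (area_incr c i \<omega> - area_incr 1 i \<omega>)^2))"
    by (rule expectation_sum_mart_diff_sq[OF md])
  also have "\<dots> \<le> (\<Sum>i<K. real c * \<eta>^2)" by (intro sum_mono expectation_area_incr_diff_sq c)
  also have "\<dots> = real K * real c * \<eta>^2" by simp
  finally show ?thesis using x by (simp add: divide_right_mono)
qed

lemma coarse_area_sums_tail:
  assumes x: "0 < x"
  shows "measure M (\<Union>j\<in>{1..J}. {\<omega>\<in>space M.
            x \<le> \<bar>(\<Sum>i<j*K. area_incr j i \<omega>) - (\<Sum>i<j*K. area_incr 1 i \<omega>)\<bar>})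
         \<le> real J ^ 3 * real K * \<eta>^2 / x^2"
proof -
  have "measure M (\<Union>j\<in>{1..J}. {\<omega>\<in>space M.
            x \<le> \<bar>(\<Sum>i<j*K. area_incr j i \<omega>) - (\<Sum>i<j*K. area_incr 1 i \<omega>)\<bar>})
      \<le> (\<Sum>j\<in>{1..J}. real (j*K) * real j * \<eta>^2 / x^2)"
  proof (rule order.trans[OF measure_UNION_le sum_mono])
    fix j assume "j \<in> {1..J}"
    then show "measure M {\<omega>\<in>space M.
        x \<le> \<bar>(\<Sum>i<j*K. area_incr j i \<omega>) - (\<Sum>i<j*K. area_incr 1 i \<omega>)\<bar>}
      \<le> real (j*K) * real j * \<eta>^2 / x^2"
      by (intro area_sum_diff_tail x) auto
  qed auto
  also have "\<dots> \<le> (\<Sum>j\<in>{1..J}. real (J*K) * real J * \<eta>^2 / x^2)"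
  proof (intro sum_mono divide_right_mono mult_right_mono)
    fix j assume "j \<in> {1..J}"
    then show "real (j*K) * real j \<le> real (J*K) * real J"
      by (intro mult_mono of_nat_mono mult_le_mono1) auto
  qed auto
  also have "\<dots> = real J ^ 3 * real K * \<eta>^2 / x^2" by (simp add: power3_eq_cube)
  finally show ?thesis .
qed

end

section \<open>Maxima over dyadic grids\<close>

lemma levy_riemann_measurable[measurable]:
  assumes "std_bm2 M W1 W2"
  shows "levy_riemann W1 W2 t k \<in> borel_measurable M"
proof -
  have [measurable]: "W1 s \<in> borel_measurable M" "W2 s \<in> borel_measurable M" for s
    using assms by (auto simp: std_bm2_def)
  show ?thesis unfolding levy_riemann_def Let_def by measurable
qed

text \<open>At level \<open>m\<close>, the Riemann sum at the dyadic time \<open>j T/2\<^sup>L\<close> has mesh \<open>j\<eta>\<close>,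
  with \<open>\<eta> = T/2\<^sup>L\<^sup>+\<^sup>m\<close>: a different grid for each \<open>j\<close>. Each is compared with the single
  fine sum of mesh \<open>\<eta>\<close>, whose running maximum Kolmogorov's inequality controls.\<close>

lemma (in bm_grid) levy_area_dyadic_exceed_subset:
  assumes lam: "0 < lam" and T: "T = 2^(L+m) * \<eta>"
  shows "{\<omega>\<in>space M. \<exists>j\<le>2^L. lam < \<bar>A (real j * T / 2^L) \<omega>\<bar>}
    \<subseteq> (\<Union>j\<in>{..2^L}. {\<omega>\<in>space M.
          \<bar>levy_riemann W1 W2 (real j * T / 2^L) m \<omega> - A (real j * T / 2^L) \<omega>\<bar> > lam/4})
      \<union> (\<Union>j\<in>{1..2^L}. {\<omega>\<in>space M.
          lam/4 \<le> \<bar>(\<Sum>i<j*2^m. area_incr j i \<omega>) - (\<Sum>i<j*2^m. area_incr 1 i \<omega>)\<bar>})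
      \<union> {\<omega>\<in>space M. \<exists>k\<le>2^(L+m). lam/2 \<le> \<bar>\<Sum>i<k. area_incr 1 i \<omega>\<bar>}"
    (is "_ \<subseteq> ?B1 \<union> ?B2 \<union> ?B3")
proof (intro subsetI UnCI)
  fix \<omega> assume "\<omega> \<in> {\<omega>\<in>space M. \<exists>j\<le>2^L. lam < \<bar>A (real j * T / 2^L) \<omega>\<bar>}"
    and not_B3: "\<omega> \<notin> ?B3" and not_B2: "\<omega> \<notin> ?B2"
  then obtain j where \<omega>: "\<omega> \<in> space M" and j: "j \<le> 2^L"
    and A_big: "lam < \<bar>A (real j * T / 2^L) \<omega>\<bar>" by blast
  let ?R = "\<Sum>i<j*2^m. area_incr j i \<omega>"
  let ?F = "\<Sum>i<j*2^m. area_incr 1 i \<omega>"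
  have "j * 2^m \<le> 2^(L+m)" using j by (simp add: power_add)
  then have F_small: "\<bar>?F\<bar> < lam/2" using not_B3 \<omega> by force
  have "\<bar>?R - ?F\<bar> < lam/4"
  proof (cases "j = 0")
    case False
    then have "j \<in> {1..2^L}" using j by auto
    then show ?thesis using not_B2 \<omega> by force
  qed (use lam in simp)
  moreover have "real j * T / 2^L = real (j * 2^m) * \<eta>" by (simp add: T power_add)
  then have "levy_riemann W1 W2 (real j * T / 2^L) m \<omega> = ?R"
    using levy_riemann_eq_sum_area_incr by simp
  ultimately have "\<bar>levy_riemann W1 W2 (real j * T / 2^L) m \<omega> - A (real j * T / 2^L) \<omega>\<bar> > lam/4"
    using F_small A_big by linarith
  then show "\<omega> \<in> ?B1" using \<omega> j by blast
qed

lemma levy_area_dyadic_max_tail_riemann: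
  assumes bm: "std_bm2 M W1 W2" and T: "0 < T" and lam: "0 < lam"
    and A_meas[measurable]: "\<And>t. A t \<in> borel_measurable M"
  shows "measure M {\<omega>\<in>space M. \<exists>j\<le>2^L. lam < \<bar>A (real j * T / 2^L) \<omega>\<bar>}
     \<le> (\<Sum>j\<le>2^L. measure M {\<omega>\<in>space M.
            \<bar>levy_riemann W1 W2 (real j * T / 2^L) m \<omega> - A (real j * T / 2^L) \<omega>\<bar> > lam/4})
       + 16 * 2^L * T^2 / (2^m * lam^2) + 4 * T^2 / lam^2"
proof -
  define \<eta> where "\<eta> = T / 2^(L+m)"
  interpret G: bm_grid M W1 W2 \<eta> using bm T by unfold_locales (simp_all add: \<eta>_def)
  note [measurable] = levy_riemann_measurable[OF bm]
  define B1 where "B1 = (\<Union>j\<in>{..2^L}. {\<omega>\<in>space M.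
      \<bar>levy_riemann W1 W2 (real j * T / 2^L) m \<omega> - A (real j * T / 2^L) \<omega>\<bar> > lam/4})"
  define B2 where "B2 = (\<Union>j\<in>{1..2^L}. {\<omega>\<in>space M.
      lam/4 \<le> \<bar>(\<Sum>i<j*2^m. G.area_incr j i \<omega>) - (\<Sum>i<j*2^m. G.area_incr 1 i \<omega>)\<bar>})"
  define B3 where "B3 = {\<omega>\<in>space M. \<exists>k\<le>2^(L+m). lam/2 \<le> \<bar>\<Sum>i<k. G.area_incr 1 i \<omega>\<bar>}"
  have [measurable]: "B1 \<in> sets M" "B2 \<in> sets M" "B3 \<in> sets M"
    unfolding B1_def B2_def B3_def by measurable
  have "{\<omega>\<in>space M. \<exists>j\<le>2^L. lam < \<bar>A (real j * T / 2^L) \<omega>\<bar>} \<subseteq> B1 \<union> B2 \<union> B3"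
    unfolding B1_def B2_def B3_def
    by (rule G.levy_area_dyadic_exceed_subset) (simp_all add: lam \<eta>_def)
  then have "measure M {\<omega>\<in>space M. \<exists>j\<le>2^L. lam < \<bar>A (real j * T / 2^L) \<omega>\<bar>}
      \<le> measure M (B1 \<union> B2 \<union> B3)"
    by (intro G.finite_measure_mono) auto
  also have "\<dots> \<le> measure M (B1 \<union> B2) + measure M B3" by (rule measure_Un_le) auto
  also have "measure M (B1 \<union> B2) \<le> measure M B1 + measure M B2" by (rule measure_Un_le) auto
  also have "measure M B1 \<le> (\<Sum>j\<le>2^L. measure M {\<omega>\<in>space M.
      \<bar>levy_riemann W1 W2 (real j * T / 2^L) m \<omega> - A (real j * T / 2^L) \<omega>\<bar> > lam/4})"
    unfolding B1_def by (rule measure_UNION_le) auto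
  also have "measure M B2 \<le> real (2^L) ^ 3 * real (2^m) * \<eta>^2 / (lam/4)^2"
    unfolding B2_def by (rule G.coarse_area_sums_tail) (use lam in simp)
  also have "\<dots> = 16 * 2^L * T^2 / (2^m * lam^2)"
    by (simp add: \<eta>_def power_add power2_eq_square power3_eq_cube field_simps)
  also have "measure M B3 \<le> (real (2^(L+m)) * \<eta>)^2 / (lam/2)^2"
    unfolding B3_def by (rule G.fine_area_max_tail) (use lam in simp)
  also have "\<dots> = 4 * T^2 / lam^2" by (simp add: \<eta>_def power2_eq_square field_simps)
  finally show ?thesis by simp
qed

lemma levy_area_dyadic_max_tail:
  assumes bm: "std_bm2 M W1 W2" and la: "levy_area M W1 W2 A" and T: "0 < T" and lam: "0 < lam"
  shows "measure M {\<omega>\<in>space M. \<exists>j\<le>2^L. lam < \<bar>A (real j * T / 2^L) \<omega>\<bar>} \<le> 4 * T^2 / lam^2"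
proof (rule LIMSEQ_le_const)
  have conv: "\<forall>t\<ge>0. \<forall>e>0.
      (\<lambda>m. measure M {\<omega>\<in>space M. \<bar>levy_riemann W1 W2 t m \<omega> - A t \<omega>\<bar> > e}) \<longlonglongrightarrow> 0"
    using la by (simp add: levy_area_def)
  let ?P = "\<lambda>m. \<Sum>j\<le>2^L. measure M {\<omega>\<in>space M.
      \<bar>levy_riemann W1 W2 (real j * T / 2^L) m \<omega> - A (real j * T / 2^L) \<omega>\<bar> > lam/4}"
  have "?P \<longlonglongrightarrow> 0"
    by (intro tendsto_null_sum conv[rule_format]) (use T lam in auto)
  moreover have "(\<lambda>m. 16 * 2^L * T^2 / (2^m * lam^2)) \<longlonglongrightarrow> 0"
  proof -
    have eq: "(\<lambda>m. 16 * 2^L * T^2 / (2^m * lam^2)) = (\<lambda>m. (16 * 2^L * T^2 / lam^2) * (1/2)^m)"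
      by (simp add: fun_eq_iff field_simps power_divide)
    show ?thesis unfolding eq by (intro tendsto_mult_right_zero LIMSEQ_power_zero) simp
  qed
  ultimately show "(\<lambda>m. ?P m + 16 * 2^L * T^2 / (2^m * lam^2) + 4 * T^2 / lam^2) \<longlonglongrightarrow> 4 * T^2 / lam^2"
    using tendsto_add[OF tendsto_add tendsto_const] by fastforce
  show "\<exists>N. \<forall>m\<ge>N. measure M {\<omega>\<in>space M. \<exists>j\<le>2^L. lam < \<bar>A (real j * T / 2^L) \<omega>\<bar>}
      \<le> ?P m + 16 * 2^L * T^2 / (2^m * lam^2) + 4 * T^2 / lam^2"
    using la by (intro exI allI impI levy_area_dyadic_max_tail_riemann[OF bm T lam])
      (simp add: levy_area_def)
qed

lemma bm_dyadic_max_tail: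
  assumes bm: "std_bm2 M W1 W2" and T: "0 < T" and mu: "2 * T < \<mu>"
  shows "measure M {\<omega>\<in>space M. \<exists>j\<le>2^L. \<mu> < W1 (real j * T / 2^L) \<omega>^2 + W2 (real j * T / 2^L) \<omega>^2}
           \<le> 48 * T^2 / (\<mu> - 2 * T)^2"
proof -
  define \<eta> where "\<eta> = T / 2^L"
  interpret G: bm_grid M W1 W2 \<eta> using bm T by unfold_locales (simp_all add: \<eta>_def)
  have T_eq: "real (2^L) * \<eta> = T" by (simp add: \<eta>_def)
  have "{\<omega>\<in>space M. \<exists>j\<le>2^L. \<mu> < W1 (real j * T / 2^L) \<omega>^2 + W2 (real j * T / 2^L) \<omega>^2}
      = {\<omega>\<in>space M. \<exists>k\<le>2^L. \<mu> < G.Wgrid False k \<omega>^2 + G.Wgrid True k \<omega>^2}"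
    by (simp add: coord_def \<eta>_def)
  also have "measure M \<dots> \<le> 48 * (real (2^L) * \<eta>)^2 / (\<mu> - 2 * real (2^L) * \<eta>)^2"
    by (rule G.Wgrid_max_tail) (use mu T_eq in auto)
  finally show ?thesis unfolding mult.assoc T_eq .
qed

lemma heis_norm_nonneg: "0 \<le> heis_norm x y z"
  by (simp add: heis_norm_def)

lemma heis_norm_measurable[measurable]:
  assumes [measurable]: "f \<in> borel_measurable M" "g \<in> borel_measurable M" "h \<in> borel_measurable M"
  shows "(\<lambda>\<omega>. heis_norm (f \<omega>) (g \<omega>) (h \<omega>)) \<in> borel_measurable M"
  unfolding heis_norm_def by measurable

lemma heis_norm_gt_cases:
  assumes "rho < heis_norm x y z" "0 < rho"
  shows "rho^2/2 < x^2 + y^2 \<or> rho^2/2 < \<bar>z\<bar>"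
proof (rule ccontr)
  let ?b = "(x^2 + y^2)^2 + z^2"
  assume "\<not> ?thesis"
  then have "x^2 + y^2 \<le> rho^2/2" and "\<bar>z\<bar> \<le> rho^2/2" by auto
  then have "(x^2 + y^2)^2 \<le> (rho^2/2)^2" and "z^2 \<le> (rho^2/2)^2"
    by (metis add_nonneg_nonneg zero_le_power2 power_mono, metis abs_ge_zero power2_abs power_mono)
  then have le: "?b \<le> rho^4 / 2" by (simp add: power2_eq_square power_numeral_reduce)
  have "rho^4 < (?b powr (1/4))^4"
    using assms unfolding heis_norm_def by (intro power_strict_mono) auto
  also have "(?b powr (1/4))^4 = ?b"
  proof (cases "?b = 0")
    case False
    then have "(?b powr (1/4))^4 = ?b powr (of_nat 4 * (1/4))" by (rule powr_power)
    then show ?thesis using False by simp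
  qed simp
  finally have "rho^4 < ?b" .
  moreover have "0 < rho^4" using assms(2) by simp
  ultimately show False using le by linarith
qed

lemma heis_dyadic_max_tail:
  assumes bm: "std_bm2 M W1 W2" and la: "levy_area M W1 W2 A" and T: "0 < T" and rho: "0 < rho"
    and big: "8 * T \<le> rho^2"
  shows "measure M {\<omega>\<in>space M. \<exists>j\<le>2^L. rho < heis_norm (W1 (real j * T / 2^L) \<omega>)
      (W2 (real j * T / 2^L) \<omega>) (A (real j * T / 2^L) \<omega>)} \<le> 800 * (T / rho^2)^2"
proof -
  interpret prob_space M using bm by (simp add: std_bm2_def)
  have [measurable]: "W1 t \<in> borel_measurable M" "W2 t \<in> borel_measurable M"
    "A t \<in> borel_measurable M" for t
    using bm la by (auto simp: std_bm2_def levy_area_def)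
  let ?s = "\<lambda>j. real j * T / 2^L"
  define SW where "SW = {\<omega>\<in>space M. \<exists>j\<le>2^L. rho^2/2 < W1 (?s j) \<omega>^2 + W2 (?s j) \<omega>^2}"
  define SA where "SA = {\<omega>\<in>space M. \<exists>j\<le>2^L. rho^2/2 < \<bar>A (?s j) \<omega>\<bar>}"
  have SWm: "SW \<in> sets M" unfolding SW_def by measurable
  have SAm: "SA \<in> sets M" unfolding SA_def by measurable
  have sub: "{\<omega>\<in>space M. \<exists>j\<le>2^L.
      rho < heis_norm (W1 (?s j) \<omega>) (W2 (?s j) \<omega>) (A (?s j) \<omega>)} \<subseteq> SW \<union> SA"
    unfolding SW_def SA_def using heis_norm_gt_cases[OF _ rho] by blast
  have r2: "0 < rho^2" using rho by simp
  have "measure M {\<omega>\<in>space M. \<exists>j\<le>2^L. rho < heis_norm (W1 (?s j) \<omega>) (W2 (?s j) \<omega>) (A (?s j) \<omega>)}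
      \<le> measure M (SW \<union> SA)" using sub SWm SAm by (intro finite_measure_mono) auto
  also have "\<dots> \<le> measure M SW + measure M SA" using SWm SAm by (rule measure_Un_le)
  also have "measure M SW \<le> 48 * T^2 / (rho^2/2 - 2 * T)^2"
    unfolding SW_def by (rule bm_dyadic_max_tail[OF bm T]) (use big T in simp)
  also have "measure M SA \<le> 4 * T^2 / (rho^2/2)^2"
    unfolding SA_def by (rule levy_area_dyadic_max_tail[OF bm la T]) (use rho in simp)
  also have "48 * T^2 / (rho^2/2 - 2 * T)^2 \<le> 48 * T^2 / (rho^2/4)^2"
  proof (rule divide_left_mono)
    have "rho^2/4 \<le> rho^2/2 - 2 * T" using big by simp
    then show "(rho^2/4)^2 \<le> (rho^2/2 - 2 * T)^2" using r2 by (intro power_mono) auto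
  next
    have "0 < rho^2/2 - 2 * T" using big T by simp
    then show "0 < (rho^2/2 - 2 * T)^2 * (rho^2/4)^2" using r2 by simp
  qed simp
  also have "48 * T^2 / (rho^2/4)^2 + 4 * T^2 / (rho^2/2)^2 = 784 * (T / rho^2)^2"
    using r2 by (simp add: power2_eq_square field_simps)
  also have "\<dots> \<le> 800 * (T / rho^2)^2" by simp
  finally show ?thesis by simp
qed

section \<open>The running maximum of the Heisenberg norm\<close>

lemma dyadic_point_below:
  fixes s T :: real
  assumes "0 < T" "s \<in> {0..T}"
  obtains j where "j \<le> 2^L" "real j * T / 2^L \<le> s" "s < real j * T / 2^L + T / 2^L"
proof
  define u where "u = s * 2^L / T"
  have u: "0 \<le> u" "u \<le> 2^L" using assms by (auto simp: u_def field_simps)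
  define j where "j = nat \<lfloor>u\<rfloor>"
  have ju: "real j \<le> u" "u < real j + 1" unfolding j_def using u by linarith+
  then show "j \<le> 2^L" using u by (metis of_nat_le_iff of_nat_numeral of_nat_power order_trans)
  have s_eq: "s = u * T / 2^L" using assms by (simp add: u_def)
  have "real j * T \<le> u * T" using ju assms(1) by (simp add: mult_right_mono)
  moreover have "u * T < (real j + 1) * T" using ju assms(1) by (simp add: mult_strict_right_mono)
  ultimately have "real j * T \<le> u * T" "u * T < real j * T + T" by (simp_all add: distrib_right)
  then show "real j * T / 2^L \<le> s" "s < real j * T / 2^L + T / 2^L"
    unfolding s_eq
    by (simp_all add: divide_right_mono divide_strict_right_mono flip: add_divide_distrib)
qed

lemma less_cSUP_iff_dyadic:
  fixes f :: "real \<Rightarrow> real"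
  assumes cont: "continuous_on {0..T} f" and T: "0 < T"
  shows "rho < (SUP s\<in>{0..T}. f s) \<longleftrightarrow> (\<exists>L. \<exists>j\<le>2^L. rho < f (real j * T / 2^L))"
proof -
  have "bdd_above (f ` {0..T})"
    by (intro bounded_imp_bdd_above compact_imp_bounded compact_continuous_image cont) simp
  then have "rho < (SUP s\<in>{0..T}. f s) \<longleftrightarrow> (\<exists>s\<in>{0..T}. rho < f s)"
    using T by (intro less_cSUP_iff) auto
  also have "\<dots> \<longleftrightarrow> (\<exists>L. \<exists>j\<le>2^L. rho < f (real j * T / 2^L))"
  proof
    assume "\<exists>L. \<exists>j\<le>2^L. rho < f (real j * T / 2^L)"
    then obtain L j where j: "j \<le> 2^L" and lt: "rho < f (real j * T / 2^L)" by blast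
    have "real j \<le> 2^L" using j by (metis of_nat_le_iff of_nat_numeral of_nat_power)
    then have "real j * T / 2^L \<in> {0..T}" using T by (simp add: field_simps)
    then show "\<exists>s\<in>{0..T}. rho < f s" using lt by blast
  next
    assume "\<exists>s\<in>{0..T}. rho < f s"
    then obtain s where s: "s \<in> {0..T}" and lt: "rho < f s" by blast
    obtain d where d: "0 < d"
      and near: "\<And>t. t \<in> {0..T} \<Longrightarrow> dist t s < d \<Longrightarrow> dist (f t) (f s) < f s - rho"
      using cont s lt unfolding continuous_on_iff by (metis diff_gt_0_iff_gt)
    obtain L where "T / d < 2^L" using real_arch_pow[of 2 "T / d"] by auto
    then have mesh: "T / 2^L < d" using d by (simp add: field_simps)
    obtain j where j: "j \<le> 2^L" and below: "real j * T / 2^L \<le> s"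
      and close: "s < real j * T / 2^L + T / 2^L"
      using dyadic_point_below[OF T s] .
    have "real j \<le> 2^L" using j by (metis of_nat_le_iff of_nat_numeral of_nat_power)
    then have "real j * T / 2^L \<in> {0..T}" using T by (simp add: field_simps)
    moreover have "dist (real j * T / 2^L) s < d"
      using below close mesh by (simp add: dist_real_def)
    ultimately have "rho < f (real j * T / 2^L)"
      using near by (fastforce simp: dist_real_def)
    then show "\<exists>L. \<exists>j\<le>2^L. rho < f (real j * T / 2^L)" using j by blast
  qed
  finally show ?thesis .
qed

lemma heis_path_continuous:
  assumes "std_bm2 M W1 W2" "levy_area M W1 W2 A" "\<omega> \<in> space M"
  shows "continuous_on {0..} (\<lambda>s. heis_norm (W1 s \<omega>) (W2 s \<omega>) (A s \<omega>))"
proof -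
  have paths: "continuous_on {0..} (\<lambda>s. W1 s \<omega>)" "continuous_on {0..} (\<lambda>s. W2 s \<omega>)"
    "continuous_on {0..} (\<lambda>s. A s \<omega>)"
    using assms by (auto simp: std_bm2_def levy_area_def)
  show ?thesis
    unfolding heis_norm_def by (rule continuous_on_powr') (auto intro!: continuous_intros paths)
qed

lemma hbm_max_gt_iff_dyadic:
  assumes "std_bm2 M W1 W2" "levy_area M W1 W2 A" "0 < T" "\<omega> \<in> space M"
  shows "rho < hbm_max W1 W2 A T \<omega> \<longleftrightarrow> (\<exists>L. \<exists>j\<le>2^L. rho < heis_norm (W1 (real j * T / 2^L) \<omega>)
           (W2 (real j * T / 2^L) \<omega>) (A (real j * T / 2^L) \<omega>))"
  unfolding hbm_max_def
  by (rule less_cSUP_iff_dyadic[OF continuous_on_subset[OF heis_path_continuous[OF assms(1,2,4)]]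
      \<open>0 < T\<close>]) auto

lemma hbm_max_nonneg:
  assumes "std_bm2 M W1 W2" "levy_area M W1 W2 A" "0 < T" "\<omega> \<in> space M"
  shows "0 \<le> hbm_max W1 W2 A T \<omega>"
proof (rule ccontr)
  assume "\<not> 0 \<le> hbm_max W1 W2 A T \<omega>"
  then have "hbm_max W1 W2 A T \<omega> < heis_norm (W1 (real 0 * T / 2^0) \<omega>) (W2 (real 0 * T / 2^0) \<omega>)
      (A (real 0 * T / 2^0) \<omega>)"
    using heis_norm_nonneg by (rule order.strict_trans2[OF not_le_imp_less])
  then have "hbm_max W1 W2 A T \<omega> < hbm_max W1 W2 A T \<omega>"
    using hbm_max_gt_iff_dyadic[OF assms] by blast
  then show False by simp
qed

lemma hbm_max_gt_eq_UN:
  assumes "std_bm2 M W1 W2" "levy_area M W1 W2 A" "0 < T"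
  shows "{\<omega>\<in>space M. rho < hbm_max W1 W2 A T \<omega>} = (\<Union>L. {\<omega>\<in>space M. \<exists>j\<le>2^L.
      rho < heis_norm (W1 (real j * T / 2^L) \<omega>) (W2 (real j * T / 2^L) \<omega>)
        (A (real j * T / 2^L) \<omega>)})"
  using hbm_max_gt_iff_dyadic[OF assms] by blast

lemma hbm_max_measurable:
  assumes bm: "std_bm2 M W1 W2" and la: "levy_area M W1 W2 A" and T: "0 < T"
  shows "hbm_max W1 W2 A T \<in> borel_measurable M"
proof -
  have [measurable]: "W1 t \<in> borel_measurable M" "W2 t \<in> borel_measurable M"
    "A t \<in> borel_measurable M" for t
    using bm la by (auto simp: std_bm2_def levy_area_def)
  have "{\<omega>\<in>space M. rho < hbm_max W1 W2 A T \<omega>} \<in> sets M" for rho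
    unfolding hbm_max_gt_eq_UN[OF bm la T] by measurable
  then show ?thesis by (simp add: borel_measurable_iff_greater)
qed

lemma hbm_max_tail:
  assumes bm: "std_bm2 M W1 W2" and la: "levy_area M W1 W2 A" and T: "0 < T" and rho: "0 < rho"
    and big: "8 * T \<le> rho^2"
  shows "measure M {\<omega>\<in>space M. rho < hbm_max W1 W2 A T \<omega>} \<le> 800 * (T / rho^2)^2"
proof -
  interpret prob_space M using bm by (simp add: std_bm2_def)
  have [measurable]: "W1 t \<in> borel_measurable M" "W2 t \<in> borel_measurable M"
    "A t \<in> borel_measurable M" for t
    using bm la by (auto simp: std_bm2_def levy_area_def)
  define G where "G L = {\<omega>\<in>space M. \<exists>j\<le>2^L. rho < heis_norm (W1 (real j * T / 2^L) \<omega>)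
      (W2 (real j * T / 2^L) \<omega>) (A (real j * T / 2^L) \<omega>)}" for L :: nat
  have "G L \<in> sets M" for L unfolding G_def by measurable
  then have G_sets: "range G \<subseteq> sets M" by auto
  have "incseq G"
  proof (rule incseq_SucI)
    fix L
    have "real (2*j) * T / 2^Suc L = real j * T / 2^L" for j by simp
    moreover have "j \<le> 2^L \<Longrightarrow> 2*j \<le> 2^Suc L" for j :: nat by simp
    ultimately show "G L \<subseteq> G (Suc L)" unfolding G_def by (smt (verit) Collect_mono_iff)
  qed
  then have "(\<lambda>L. measure M (G L)) \<longlonglongrightarrow> measure M (\<Union>L. G L)"
    using G_sets by (rule finite_Lim_measure_incseq[rotated])
  then have "measure M (\<Union>L. G L) \<le> 800 * (T / rho^2)^2"
    by (rule LIMSEQ_le_const2) (use heis_dyadic_max_tail[OF bm la T rho big] in \<open>auto simp: G_def\<close>)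
  then show ?thesis unfolding hbm_max_gt_eq_UN[OF bm la T] G_def .
qed

section \<open>Borel-Cantelli along \<open>t\<^sub>n = n\<^sup>n\<close>\<close>

lemma INT_UN_atLeast_eq_limsup: "(\<Inter>k\<in>{m..}. \<Union>n\<in>{k..}. A n) = limsup A"
  unfolding limsup_INF_SUP
proof (intro equalityI subsetI)
  fix x assume x: "x \<in> (\<Inter>k\<in>{m..}. \<Union>n\<in>{k..}. A n)"
  have "\<exists>n\<ge>k. x \<in> A n" for k
  proof -
    from x have "x \<in> (\<Union>n\<in>{max k m..}. A n)" by auto
    then show ?thesis by auto
  qed
  then show "x \<in> (\<Sqinter>k. \<Squnion>n\<in>{k..}. A n)" by auto
qed auto

lemma AE_tendsto_zero_if_limsup_null:
  fixes f :: "nat \<Rightarrow> 'a \<Rightarrow> real"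
  assumes nonneg: "\<And>n \<omega>. \<omega> \<in> space M \<Longrightarrow> 0 \<le> f n \<omega>"
    and null: "\<And>\<epsilon>. 0 < \<epsilon> \<Longrightarrow> limsup (\<lambda>n. {\<omega>\<in>space M. \<epsilon> < f n \<omega>}) \<in> null_sets M"
  shows "AE \<omega> in M. (\<lambda>n. f n \<omega>) \<longlonglongrightarrow> 0"
proof -
  have "AE \<omega> in M. \<forall>m. \<omega> \<notin> limsup (\<lambda>n. {\<omega>\<in>space M. 1 / real (Suc m) < f n \<omega>})"
    using null by (simp add: AE_all_countable AE_not_in)
  then show ?thesis
  proof (elim AE_mp, intro AE_I2 impI)
    fix \<omega> assume \<omega>: "\<omega> \<in> space M"
      and outside: "\<forall>m. \<omega> \<notin> limsup (\<lambda>n. {\<omega>\<in>space M. 1 / real (Suc m) < f n \<omega>})"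
    show "(\<lambda>n. f n \<omega>) \<longlonglongrightarrow> 0"
    proof (rule LIMSEQ_I)
      fix r :: real assume "0 < r"
      then obtain m where m: "1 / real (Suc m) < r"
        using reals_Archimedean by (auto simp: inverse_eq_divide)
      from outside obtain k where "\<forall>n\<ge>k. \<omega> \<notin> {\<omega>\<in>space M. 1 / real (Suc m) < f n \<omega>}"
        unfolding limsup_INF_SUP by blast
      then have "\<forall>n\<ge>k. norm (f n \<omega> - 0) < r" using \<omega> m nonneg[OF \<omega>] by force
      then show "\<exists>k. \<forall>n\<ge>k. norm (f n \<omega> - 0) < r" ..
    qed
  qed
qed

lemma tseq_pos: "0 < tseq n"
  by (cases n) (simp_all add: tseq_def)

lemma one_le_ln_nat: "3 \<le> n \<Longrightarrow> 1 \<le> ln (real n)"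
  using exp_le by (subst ln_ge_iff) auto

lemma ln_tseq: "3 \<le> n \<Longrightarrow> ln (tseq n) = real n * ln (real n)"
  by (simp add: tseq_def ln_realpow)

lemma ln_n_ln_n_pos: "3 \<le> n \<Longrightarrow> 0 < ln (real n * ln (real n))"
proof -
  assume n: "3 \<le> n"
  have "3 * 1 \<le> real n * ln (real n)" using n one_le_ln_nat[OF n] by (intro mult_mono) auto
  then show ?thesis by simp
qed

lemma lil_phi_tseq_nonneg: "0 \<le> lil_phi (tseq n)"
proof (cases "n \<le> 1")
  case True
  \<comment> \<open>then \<open>t\<^sub>n = 1\<close>, and \<open>ln (ln 1) = ln 0 = 0\<close> by HOL's convention\<close>
  then have "tseq n = 1" by (cases n) (auto simp: tseq_def)
  then show ?thesis by (simp add: lil_phi_def)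
next
  case False
  have "exp 1 \<le> real 2 ^ 2" using exp_le by simp
  also have "\<dots> \<le> real n ^ 2" using False by (intro power_mono) auto
  also have "\<dots> \<le> tseq n" unfolding tseq_def using False by (intro power_increasing) auto
  finally have "1 \<le> ln (tseq n)" using tseq_pos[of n] by (subst ln_ge_iff) auto
  then show ?thesis using tseq_pos[of n] by (simp add: lil_phi_def)
qed

lemma tseq_pred_lil_phi_sq_le:
  assumes n: "3 \<le> n"
  shows "tseq (n - 1) * lil_phi (tseq n)^2 \<le> ln (real n * ln (real n)) / real n"
proof -
  have l: "0 < ln (real n * ln (real n))" by (rule ln_n_ln_n_pos[OF n])
  have phi_sq: "lil_phi (tseq n)^2 = ln (real n * ln (real n)) / tseq n"
    using l tseq_pos[of n] by (simp add: lil_phi_def ln_tseq[OF n])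
  have "tseq (n - 1) \<le> real n ^ (n - 1)" unfolding tseq_def by (intro power_mono) auto
  then have "tseq (n - 1) * real n \<le> tseq n"
    using n by (simp add: tseq_def power_eq_if[of "real n" n] mult.commute)
  then have "tseq (n - 1) / tseq n \<le> 1 / real n"
    using n tseq_pos[of n] by (simp add: field_simps)
  then have "tseq (n - 1) / tseq n * ln (real n * ln (real n))
      \<le> 1 / real n * ln (real n * ln (real n))"
    using l by (intro mult_right_mono) auto
  then show ?thesis unfolding phi_sq by simp
qed

lemma hbm_max_scaled_tail:
  assumes bm: "std_bm2 M W1 W2" and la: "levy_area M W1 W2 A"
    and T: "0 < T" and c: "0 < c" and eps: "0 < \<epsilon>" and small: "8 * (T * c^2) \<le> \<epsilon>^2"
  shows "measure M {\<omega>\<in>space M. \<epsilon> < c * hbm_max W1 W2 A T \<omega>} \<le> 800 * (T * c^2 / \<epsilon>^2)^2"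
proof -
  have "{\<omega>\<in>space M. \<epsilon> < c * hbm_max W1 W2 A T \<omega>} = {\<omega>\<in>space M. \<epsilon> / c < hbm_max W1 W2 A T \<omega>}"
    using c by (auto simp: pos_divide_less_eq mult.commute)
  moreover have "T / (\<epsilon> / c)^2 = T * c^2 / \<epsilon>^2" by (simp add: power_divide)
  moreover have "8 * T \<le> (\<epsilon> / c)^2" using small c by (simp add: power_divide field_simps)
  ultimately show ?thesis using hbm_max_tail[OF bm la T, of "\<epsilon> / c"] c eps by simp
qed

lemma hbm_exceed_tseq_tail:
  assumes bm: "std_bm2 M W1 W2" and la: "levy_area M W1 W2 A" and eps: "0 < \<epsilon>" and n: "3 \<le> n"
    and small: "8 * (ln (real n * ln (real n)) / real n) \<le> \<epsilon>^2"
  shows "measure M {\<omega>\<in>space M. \<epsilon> < lil_phi (tseq n) * hbm_max W1 W2 A (tseq (n - 1)) \<omega>}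
           \<le> 800 * (ln (real n * ln (real n)) / real n / \<epsilon>^2)^2"
proof -
  define q where "q = tseq (n - 1) * lil_phi (tseq n)^2"
  have q_le: "q \<le> ln (real n * ln (real n)) / real n"
    unfolding q_def by (rule tseq_pred_lil_phi_sq_le[OF n])
  have "0 < lil_phi (tseq n)"
    using ln_n_ln_n_pos[OF n] tseq_pos[of n] by (simp add: lil_phi_def ln_tseq[OF n])
  then have "measure M {\<omega>\<in>space M. \<epsilon> < lil_phi (tseq n) * hbm_max W1 W2 A (tseq (n - 1)) \<omega>}
      \<le> 800 * (q / \<epsilon>^2)^2"
    using q_le small unfolding q_def
    by (intro hbm_max_scaled_tail[OF bm la tseq_pos _ eps]) (auto simp: field_simps)
  also have "\<dots> \<le> 800 * (ln (real n * ln (real n)) / real n / \<epsilon>^2)^2"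
    using q_le tseq_pos[of "n - 1"]
    by (intro mult_left_mono power_mono divide_right_mono) (auto simp: q_def)
  finally show ?thesis .
qed

lemma summable_hbm_exceed_tseq:
  assumes bm: "std_bm2 M W1 W2" and la: "levy_area M W1 W2 A" and eps: "0 < \<epsilon>"
  shows "summable (\<lambda>n. measure M {\<omega>\<in>space M.
      \<epsilon> < lil_phi (tseq n) * hbm_max W1 W2 A (tseq (n - 1)) \<omega>})"
proof (rule summable_comparison_test_ev)
  define r where "r n = ln (real n * ln (real n)) / real n" for n :: nat
  have "r \<in> o(\<lambda>n. real n powr (-3/4))" unfolding r_def by real_asymp
  then have ev_r: "eventually (\<lambda>n. \<bar>r n\<bar> \<le> real n powr (-3/4)) sequentially"
    using landau_o.smallD[of r sequentially "\<lambda>n. real n powr (-3/4)" 1] by simp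
  have "(\<lambda>n. real n powr (-3/4)) \<longlonglongrightarrow> 0"
    by (intro tendsto_neg_powr filterlim_real_sequentially) simp
  then have ev_small: "eventually (\<lambda>n. real n powr (-3/4) < \<epsilon>^2 / 8) sequentially"
    using order_tendstoD(2)[of _ 0 sequentially "\<epsilon>^2 / 8"] eps by simp
  show "eventually (\<lambda>n. norm (measure M {\<omega>\<in>space M.
      \<epsilon> < lil_phi (tseq n) * hbm_max W1 W2 A (tseq (n - 1)) \<omega>})
        \<le> (800 / \<epsilon>^4) * real n powr (-3/2)) sequentially"
    using ev_r ev_small eventually_ge_at_top[of 3]
  proof eventually_elim
    case (elim n)
    have r0: "0 \<le> r n" unfolding r_def using ln_n_ln_n_pos[OF elim(3)] by simp
    have "r n \<le> real n powr (-3/4)" using elim(1) r0 by simp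
    then have small: "8 * r n \<le> \<epsilon>^2" using elim(2) by simp
    have "measure M {\<omega>\<in>space M. \<epsilon> < lil_phi (tseq n) * hbm_max W1 W2 A (tseq (n - 1)) \<omega>}
        \<le> 800 * (r n / \<epsilon>^2)^2"
      unfolding r_def by (rule hbm_exceed_tseq_tail[OF bm la eps elim(3) small[unfolded r_def]])
    also have "\<dots> \<le> 800 * (real n powr (-3/4) / \<epsilon>^2)^2"
      using elim r0 by (intro mult_left_mono power_mono divide_right_mono) auto
    also have "\<dots> = (800 / \<epsilon>^4) * real n powr (-3/2)"
      using elim(3) by (simp add: power_divide power2_eq_square power4_eq_xxxx flip: powr_add)
    finally show ?case by simp
  qed
  show "summable (\<lambda>n. (800 / \<epsilon>^4) * real n powr (-3/2))"
    by (intro summable_mult) (simp add: summable_real_powr_iff)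
qed

theorem lemma5p2:
  fixes M :: "'a measure" and W1 W2 A :: "real \<Rightarrow> 'a \<Rightarrow> real"
  assumes "std_bm2 M W1 W2"
    and "levy_area M W1 W2 A"
  shows "(\<forall>\<epsilon>>0. measure M (\<Inter>k\<in>{2..}. \<Union>n\<in>{k..}.
            {\<omega>\<in>space M. lil_phi (tseq n) * hbm_max W1 W2 A (tseq (n - 1)) \<omega> > \<epsilon>}) = 0)
       \<and> (AE \<omega> in M. (\<lambda>n. lil_phi (tseq n) * hbm_max W1 W2 A (tseq (n - 1)) \<omega>) \<longlonglongrightarrow> 0)"
proof -
  interpret prob_space M using assms(1) by (simp add: std_bm2_def)
  have [measurable]: "hbm_max W1 W2 A (tseq n) \<in> borel_measurable M" for n
    using hbm_max_measurable[OF assms tseq_pos] .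
  have null: "limsup (\<lambda>n. {\<omega>\<in>space M. \<epsilon> < lil_phi (tseq n) * hbm_max W1 W2 A (tseq (n - 1)) \<omega>})
      \<in> null_sets M" if "0 < \<epsilon>" for \<epsilon>
    using summable_hbm_exceed_tseq[OF assms that]
    by (intro borel_cantelli_limsup1) (auto simp: less_top[symmetric])
  show ?thesis
  proof
    show "\<forall>\<epsilon>>0. measure M (\<Inter>k\<in>{2..}. \<Union>n\<in>{k..}.
        {\<omega>\<in>space M. lil_phi (tseq n) * hbm_max W1 W2 A (tseq (n - 1)) \<omega> > \<epsilon>}) = 0"
      using null by (simp add: INT_UN_atLeast_eq_limsup measure_eq_0_null_sets)
    show "AE \<omega> in M. (\<lambda>n. lil_phi (tseq n) * hbm_max W1 W2 A (tseq (n - 1)) \<omega>) \<longlonglongrightarrow> 0"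
      using null lil_phi_tseq_nonneg hbm_max_nonneg[OF assms tseq_pos]
      by (intro AE_tendsto_zero_if_limsup_null) simp_all
  qed
qed

end
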